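(* Let $N\ge0$; for $t=1,\dots,N$ let $p_t\ge1$ and positive integers $n_{t1}\ge\dots\ge n_{tp_t}$ be given, and let $(\alpha_t,\beta_t)\in\mathbb C^2\setminus\{0\}$ be such that the points $(\alpha_t:\beta_t)\in\mathbb{CP}^1$ are pairwise different. Let $\mathfrak g$ have basis $g,h_1,h_2,e^i_{tj},f^i_{tj}$ ($t=1,\dots,N$, $i=1,\dots,p_t$, $j=1,\dots,n_{ti}$) with brackets $[g,h_1]=h_1$, $[g,h_2]=h_2$, $[g,e^i_{tk}]=e^i_{tk}$, $[e^i_{tj},f^i_{tk}]=e^i_{t,j-k}$ if $j>k$, $[e^i_{tj},f^i_{tk}]=\alpha_th_1+\beta_th_2$ if $j=k$, all other brackets of basis elements (not determined by these and antisymmetry) being zero. Then $\mathfrak g$ is a Lie algebra whose Jordan–Kronecker invariants consist of one Kronecker $3\times3$ block and the Jordan tuples $J_{\lambda_t}(2n_{t1},\dots,2n_{tp_t})$, $t=1,\dots,N$.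
   Context: For a finite-dimensional complex Lie algebra $\mathfrak g$ and $x\in\mathfrak g^*$, let $\mathcal A_x$ be the skew form $(\xi,\eta)\mapsto\langle x,[\xi,\eta]\rangle$. By the Jordan–Kronecker theorem, a pair of skew forms on a finite-dimensional complex vector space admits a basis in which both are block-diagonal with Jordan $2n\times2n$ blocks with eigenvalues $\mu\in\mathbb C\cup\{\infty\}$ ($A_i=\begin{pmatrix}0&J_\mu\\-J_\mu^T&0\end{pmatrix}$, $B_i=\begin{pmatrix}0&I_n\\-I_n&0\end{pmatrix}$) and Kronecker $(2k-1)\times(2k-1)$ blocks ($A_i=\begin{pmatrix}0&P\\-P^T&0\end{pmatrix}$, $B_i=\begin{pmatrix}0&Q\\-Q^T&0\end{pmatrix}$, $P=(I_{k-1}|0)$, $Q=(0|I_{k-1})$); block data grouped by eigenvalue are unique. The JK invariants of $\mathfrak g$ are the Kronecker sizes and the Jordan tuples $J_{\lambda_i}(\dots)$ (sizes of Jordan blocks with common eigenvalue $\lambda_i$; distinct eigenvalues as distinct formal symbols) of $(\mathcal A_x,\mathcal A_a)$ for $(x,a)$ in a nonempty Zariski open subset of $\mathfrak g^*\times\mathfrak g^*$. *)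

theory Defs
  imports "HOL-Analysis.Analysis" "HOL-Library.Multiset"
begin

text \<open>Blocks of the Jordan--Kronecker normal form.  \<open>Jor mu n\<close> is a Jordan block of
 size 2n x 2n with eigenvalue mu (None = infinity); \<open>Kron k\<close> is a Kronecker block of
 size (2k-1) x (2k-1).\<close>
datatype jkblock = Jor "complex option" nat | Kron nat

fun block_dim :: "jkblock \<Rightarrow> nat" where
  "block_dim (Jor mu n) = 2 * n"
| "block_dim (Kron k) = 2 * k - 1"

fun block_ok :: "jkblock \<Rightarrow> bool" where
  "block_ok (Jor mu n) = (n \<ge> 1)"
| "block_ok (Kron k) = (k \<ge> 1)"

text \<open>The skew matrix (0 M; -M^T 0) with the upper-left zero block of size m.\<close>
definition skew_blk :: "nat \<Rightarrow> (nat \<Rightarrow> nat \<Rightarrow> complex) \<Rightarrow> nat \<Rightarrow> nat \<Rightarrow> complex" where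
  "skew_blk m M i j =
     (if i < m \<and> m \<le> j then M i (j - m)
      else if m \<le> i \<and> j < m then - M j (i - m) else 0)"

definition jordan_cell :: "complex \<Rightarrow> nat \<Rightarrow> nat \<Rightarrow> complex" where
  "jordan_cell mu r s = (if r = s then mu else if s = r + 1 then 1 else 0)"

definition id_cell :: "nat \<Rightarrow> nat \<Rightarrow> complex" where
  "id_cell r s = (if r = s then 1 else 0)"

text \<open>P = (I_{k-1} | 0) and Q = (0 | I_{k-1}).\<close>
definition P_cell :: "nat \<Rightarrow> nat \<Rightarrow> complex" where
  "P_cell r s = (if s = r then 1 else 0)"

definition Q_cell :: "nat \<Rightarrow> nat \<Rightarrow> complex" where
  "Q_cell r s = (if s = r + 1 then 1 else 0)"

fun blockA :: "jkblock \<Rightarrow> nat \<Rightarrow> nat \<Rightarrow> complex" where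
  "blockA (Jor (Some mu) n) = skew_blk n (jordan_cell mu)"
| "blockA (Jor None n) = skew_blk n id_cell"
| "blockA (Kron k) = skew_blk (k - 1) P_cell"

fun blockB :: "jkblock \<Rightarrow> nat \<Rightarrow> nat \<Rightarrow> complex" where
  "blockB (Jor (Some mu) n) = skew_blk n id_cell"
| "blockB (Jor None n) = skew_blk n (jordan_cell 0)"
| "blockB (Kron k) = skew_blk (k - 1) Q_cell"

definition is_basis_family ::
  "('v \<Rightarrow> complex) set \<Rightarrow> 'i set \<Rightarrow> ('i \<Rightarrow> 'v \<Rightarrow> complex) \<Rightarrow> bool" where
  "is_basis_family V S e \<longleftrightarrow> finite S \<and> (\<forall>s\<in>S. e s \<in> V) \<and>
     (\<forall>v\<in>V. \<exists>!c. (\<forall>s. s \<notin> S \<longrightarrow> c s = 0) \<and> v = (\<lambda>k. \<Sum>s\<in>S. c s * e s k))"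

definition JK_decomposition ::
  "('v \<Rightarrow> complex) set \<Rightarrow> (('v \<Rightarrow> complex) \<Rightarrow> ('v \<Rightarrow> complex) \<Rightarrow> complex)
   \<Rightarrow> (('v \<Rightarrow> complex) \<Rightarrow> ('v \<Rightarrow> complex) \<Rightarrow> complex) \<Rightarrow> jkblock list \<Rightarrow> bool" where
  "JK_decomposition V A B bl \<longleftrightarrow> (\<forall>b\<in>set bl. block_ok b) \<and>
     (\<exists>e :: nat \<times> nat \<Rightarrow> 'v \<Rightarrow> complex.
        is_basis_family V {(b, i). b < length bl \<and> i < block_dim (bl ! b)} e \<and>
        (\<forall>b i b' j. b < length bl \<longrightarrow> i < block_dim (bl ! b) \<longrightarrow>
                   b' < length bl \<longrightarrow> j < block_dim (bl ! b') \<longrightarrow>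
           A (e (b, i)) (e (b', j)) = (if b = b' then blockA (bl ! b) i j else 0) \<and>
           B (e (b, i)) (e (b', j)) = (if b = b' then blockB (bl ! b) i j else 0)))"

inductive_set polyfun2 :: "(('v \<Rightarrow> complex) \<times> ('v \<Rightarrow> complex) \<Rightarrow> complex) set" where
  pf_const: "(\<lambda>_. c) \<in> polyfun2"
| pf_fst: "(\<lambda>(x, a). x k) \<in> polyfun2"
| pf_snd: "(\<lambda>(x, a). a k) \<in> polyfun2"
| pf_add: "f \<in> polyfun2 \<Longrightarrow> g \<in> polyfun2 \<Longrightarrow> (\<lambda>z. f z + g z) \<in> polyfun2"
| pf_mult: "f \<in> polyfun2 \<Longrightarrow> g \<in> polyfun2 \<Longrightarrow> (\<lambda>z. f z * g z) \<in> polyfun2"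

definition zariski_open_in ::
  "(('v \<Rightarrow> complex) \<times> ('v \<Rightarrow> complex)) set \<Rightarrow> (('v \<Rightarrow> complex) \<times> ('v \<Rightarrow> complex)) set \<Rightarrow> bool" where
  "zariski_open_in D U \<longleftrightarrow>
     (\<exists>F \<subseteq> polyfun2. U = {z \<in> D. \<exists>f\<in>F. f z \<noteq> 0})"

definition is_lie_algebra :: "('v \<Rightarrow> complex) set \<Rightarrow>
   (('v \<Rightarrow> complex) \<Rightarrow> ('v \<Rightarrow> complex) \<Rightarrow> ('v \<Rightarrow> complex)) \<Rightarrow> bool" where
  "is_lie_algebra V br \<longleftrightarrow>
     (\<forall>x\<in>V. \<forall>y\<in>V. br x y \<in> V) \<and>
     (\<forall>x\<in>V. \<forall>y\<in>V. \<forall>z\<in>V. \<forall>c::complex.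
        br (\<lambda>k. x k + c * y k) z = (\<lambda>k. br x z k + c * br y z k) \<and>
        br z (\<lambda>k. x k + c * y k) = (\<lambda>k. br z x k + c * br z y k)) \<and>
     (\<forall>x\<in>V. br x x = (\<lambda>_. 0)) \<and>
     (\<forall>x\<in>V. \<forall>y\<in>V. \<forall>z\<in>V.
        (\<lambda>k. br x (br y z) k + br y (br z x) k + br z (br x y) k) = (\<lambda>_. 0))"

text \<open>Basis indices: g, h1, h2, E t i j = e^i_{tj}, F t i j = f^i_{tj}.\<close>
datatype gidx = G | H1 | H2 | E nat nat nat | F nat nat nat

definition gI :: "nat \<Rightarrow> (nat \<Rightarrow> nat) \<Rightarrow> (nat \<Rightarrow> nat \<Rightarrow> nat) \<Rightarrow> gidx set" where
  "gI N p n = {G, H1, H2}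
     \<union> {E t i j | t i j. 1 \<le> t \<and> t \<le> N \<and> 1 \<le> i \<and> i \<le> p t \<and> 1 \<le> j \<and> j \<le> n t i}
     \<union> {F t i j | t i j. 1 \<le> t \<and> t \<le> N \<and> 1 \<le> i \<and> i \<le> p t \<and> 1 \<le> j \<and> j \<le> n t i}"

definition unit_vec :: "gidx \<Rightarrow> gidx \<Rightarrow> complex" where
  "unit_vec a = (\<lambda>k. if k = a then 1 else 0)"

fun base_br :: "(nat \<Rightarrow> complex) \<Rightarrow> (nat \<Rightarrow> complex) \<Rightarrow> gidx \<Rightarrow> gidx \<Rightarrow> gidx \<Rightarrow> complex" where
  "base_br \<alpha> \<beta> G H1 = unit_vec H1"
| "base_br \<alpha> \<beta> G H2 = unit_vec H2"
| "base_br \<alpha> \<beta> G (E t i k) = unit_vec (E t i k)"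
| "base_br \<alpha> \<beta> (E t i j) (F t' i' k) =
     (if t = t' \<and> i = i' then
        (if k < j then unit_vec (E t i (j - k))
         else if j = k then (\<lambda>l. \<alpha> t * unit_vec H1 l + \<beta> t * unit_vec H2 l)
         else (\<lambda>_. 0))
      else (\<lambda>_. 0))"
| "base_br \<alpha> \<beta> _ _ = (\<lambda>_. 0)"

definition basis_br :: "(nat \<Rightarrow> complex) \<Rightarrow> (nat \<Rightarrow> complex) \<Rightarrow> gidx \<Rightarrow> gidx \<Rightarrow> gidx \<Rightarrow> complex" where
  "basis_br \<alpha> \<beta> a b = (\<lambda>l. base_br \<alpha> \<beta> a b l - base_br \<alpha> \<beta> b a l)"

definition gspace :: "nat \<Rightarrow> (nat \<Rightarrow> nat) \<Rightarrow> (nat \<Rightarrow> nat \<Rightarrow> nat) \<Rightarrow> (gidx \<Rightarrow> complex) set" where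
  "gspace N p n = {v. \<forall>k. k \<notin> gI N p n \<longrightarrow> v k = 0}"

definition gbr :: "nat \<Rightarrow> (nat \<Rightarrow> nat) \<Rightarrow> (nat \<Rightarrow> nat \<Rightarrow> nat) \<Rightarrow> (nat \<Rightarrow> complex) \<Rightarrow> (nat \<Rightarrow> complex)
   \<Rightarrow> (gidx \<Rightarrow> complex) \<Rightarrow> (gidx \<Rightarrow> complex) \<Rightarrow> (gidx \<Rightarrow> complex)" where
  "gbr N p n \<alpha> \<beta> x y =
     (\<lambda>l. \<Sum>a\<in>gI N p n. \<Sum>b\<in>gI N p n. x a * y b * basis_br \<alpha> \<beta> a b l)"

text \<open>Elements of the dual space g* are given by their coordinates in the dual basis;
 the form A_x(xi, eta) = <x, [xi, eta]>.\<close>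
definition formA :: "nat \<Rightarrow> (nat \<Rightarrow> nat) \<Rightarrow> (nat \<Rightarrow> nat \<Rightarrow> nat) \<Rightarrow> (nat \<Rightarrow> complex) \<Rightarrow> (nat \<Rightarrow> complex)
   \<Rightarrow> (gidx \<Rightarrow> complex) \<Rightarrow> (gidx \<Rightarrow> complex) \<Rightarrow> (gidx \<Rightarrow> complex) \<Rightarrow> complex" where
  "formA N p n \<alpha> \<beta> x \<xi> \<eta> = (\<Sum>l\<in>gI N p n. x l * gbr N p n \<alpha> \<beta> \<xi> \<eta> l)"

end

theory Submission
  imports Defs "HOL-Library.Function_Algebras" "HOL-Computational_Algebra.Formal_Power_Series"
begin

(* The bracket is graded by ad g, and for fixed (t, i) the elements f^i_{tk} act on the span of
   alpha_t h1 + beta_t h2 and the e^i_{tj} by commuting shifts; so the Jacobi identity holds on basis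
   elements, the triples (e, f, f) being the only ones that need an argument.

   For generic (x, a), g and the two elements of span(h1, h2) on which x and a take the values
   (1, 0) and (0, 1) span a 3 x 3 Kronecker block.  After correcting each e by an element of
   span(h1, h2) so that it pairs trivially with g, the pairing of e^i_{t*} with f^i_{t*} under the
   form of y is the truncated Toeplitz form (u, v) |-> coefficient n - 1 of u v P_y, where
   P_y = y(alpha_t h1 + beta_t h2) + sum_d y(e^i_{td}) X^d.  Such a pair of forms is one Jordan
   block of size 2 n with eigenvalue P_x(0) / P_a(0), and these eigenvalues are distinct for
   distinct t because the points (alpha_t : beta_t) are.  A family with this block-diagonal Gram
   matrix is linearly independent, hence a basis by counting, and all genericity conditions
   together say that a single polynomial does not vanish. *)

no_notation vec_nth (infixl "$" 90)
notation fps_nth (infixl "$" 75)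

section \<open>Jordan pairs of truncated Toeplitz forms\<close>

lemma lower_triangular_system_solvable:
  fixes c :: "nat \<Rightarrow> nat \<Rightarrow> 'a :: field"
  assumes "\<And>q. c q q \<noteq> 0"
  shows "\<exists>\<phi>. \<forall>q<m. (\<Sum>i\<le>q. \<phi> i * c q i) = b q"
proof (induction m)
  case 0
  then show ?case by simp
next
  case (Suc m)
  then obtain \<phi> where \<phi>: "\<forall>q<m. (\<Sum>i\<le>q. \<phi> i * c q i) = b q" by blast
  define \<psi> where "\<psi> = \<phi>(m := (b m - (\<Sum>i<m. \<phi> i * c m i)) / c m m)"
  have "(\<Sum>i\<le>q. \<psi> i * c q i) = b q" if "q < Suc m" for q
  proof (cases "q < m")
    case True
    then have "(\<Sum>i\<le>q. \<psi> i * c q i) = (\<Sum>i\<le>q. \<phi> i * c q i)"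
      by (intro sum.cong) (auto simp: \<psi>_def)
    then show ?thesis using \<phi> True by simp
  next
    case False
    with that have "q = m" by simp
    have "(\<Sum>i<m. \<psi> i * c m i) = (\<Sum>i<m. \<phi> i * c m i)"
      by (intro sum.cong) (auto simp: \<psi>_def)
    then show ?thesis
      using \<open>q = m\<close> assms[of m] by (simp add: lessThan_Suc_atMost[symmetric] \<psi>_def)
  qed
  then show ?case by blast
qed

lemma fps_mult_power_nth_shift:
  fixes \<rho> :: "'a :: comm_ring_1 fps"
  assumes "\<rho> $ 0 = 0"
  shows "(W * \<rho> ^ k) $ d = (if d < k then 0 else (W * fps_shift 1 \<rho> ^ k) $ (d - k))"
proof -
  have "\<rho> = fps_X * fps_shift 1 \<rho>"
    using assms by (intro fps_ext) simp
  then have "W * \<rho> ^ k = fps_X ^ k * (W * fps_shift 1 \<rho> ^ k)"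
    by (metis mult.left_commute power_mult_distrib)
  then show ?thesis by (simp add: fps_X_power_mult_nth)
qed

lemma fps_functional_dual_to_powers:
  fixes \<rho> :: "'a :: field fps"
  assumes "\<rho> $ 0 = 0" "\<rho> $ 1 \<noteq> 0"
  shows "\<exists>\<Phi>. \<forall>k. (\<Phi> * \<rho> ^ k) $ m = (if k = m then 1 else 0)"
proof -
  define c where "c q i = (\<rho> ^ (m - q)) $ (m - i)" for q i
  have "c q q \<noteq> 0" for q
    using fps_mult_power_nth_shift[OF assms(1), of 1 "m - q" "m - q"] assms(2)
    by (simp add: c_def fps_power_zeroth)
  then obtain \<phi> where \<phi>: "\<forall>q<Suc m. (\<Sum>i\<le>q. \<phi> i * c q i) = (if q = 0 then 1 else 0)"
    using lower_triangular_system_solvable[of c "Suc m" "\<lambda>q. if q = 0 then 1 else 0"] by blast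
  have "(Abs_fps \<phi> * \<rho> ^ k) $ m = (if k = m then 1 else 0)" for k
  proof (cases "k \<le> m")
    case True
    define q where "q = m - k"
    have "(Abs_fps \<phi> * \<rho> ^ k) $ m = (\<Sum>i\<le>m. \<phi> i * (\<rho> ^ k) $ (m - i))"
      by (simp add: fps_mult_nth atLeast0AtMost)
    also have "\<dots> = (\<Sum>i\<le>q. \<phi> i * (\<rho> ^ k) $ (m - i))"
      using fps_mult_power_nth_shift[OF assms(1), of 1 k] True
      by (intro sum.mono_neutral_right) (auto simp: q_def)
    also have "\<dots> = (\<Sum>i\<le>q. \<phi> i * c q i)"
      using True by (simp add: c_def q_def)
    also have "\<dots> = (if q = 0 then 1 else 0)"
      using \<phi> by (simp add: q_def)
    finally show ?thesis using True by (auto simp: q_def)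
  next
    case False
    then show ?thesis
      using fps_mult_power_nth_shift[OF assms(1), of "Abs_fps \<phi>" k m] by simp
  qed
  then show ?thesis by blast
qed

text \<open>With \<open>\<rho> = Px / Pa - Px $ 0 / Pa $ 0\<close>, which has order exactly one, take \<open>U r = \<Phi> * \<rho> ^ r / Pa\<close> and
  \<open>V s = \<rho> ^ (m - 1 - s)\<close>, where \<open>\<Phi>\<close> is dual to the powers of \<open>\<rho>\<close>.\<close>
lemma fps_pencil_jordan_basis:
  fixes Px Pa :: "complex fps"
  assumes a0: "Pa $ 0 \<noteq> 0" and nondeg: "Px $ 1 * Pa $ 0 - Pa $ 1 * Px $ 0 \<noteq> 0"
  shows "\<exists>U V. \<forall>r<m. \<forall>s<m. (U r * V s * Pa) $ (m - 1) = id_cell r s \<and>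
           (U r * V s * Px) $ (m - 1) = jordan_cell (Px $ 0 / Pa $ 0) r s"
proof -
  define \<mu> where "\<mu> = Px $ 0 / Pa $ 0"
  define \<rho> where "\<rho> = Px * inverse Pa - fps_const \<mu>"
  have inv: "inverse Pa * Pa = 1" using a0 by (rule inverse_mult_eq_1)
  then have inv': "Pa * inverse Pa = 1" by (simp add: mult.commute)
  have \<rho>Pa: "\<rho> * Pa = Px - fps_const \<mu> * Pa"
    by (simp add: \<rho>_def algebra_simps inv inv')
  have "\<rho> $ 0 * Pa $ 0 = 0"
    using arg_cong[OF \<rho>Pa, of "\<lambda>S. S $ 0"] a0 by (simp add: \<mu>_def)
  then have \<rho>0: "\<rho> $ 0 = 0" using a0 by simp
  have "\<rho> $ 1 * Pa $ 0 = Px $ 1 - \<mu> * Pa $ 1"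
    using arg_cong[OF \<rho>Pa, of "\<lambda>S. S $ 1"] by (simp add: fps_mult_nth_1 \<rho>0)
  then have \<rho>1: "\<rho> $ 1 \<noteq> 0"
    using a0 nondeg by (auto simp: \<mu>_def field_simps)
  obtain \<Phi> where \<Phi>: "\<And>k. (\<Phi> * \<rho> ^ k) $ (m - 1) = (if k = m - 1 then 1 else 0)"
    using fps_functional_dual_to_powers[OF \<rho>0 \<rho>1, of "m - 1"] by blast
  define U where "U r = \<Phi> * \<rho> ^ r * inverse Pa" for r
  define V where "V s = \<rho> ^ (m - 1 - s)" for s
  have "(U r * V s * Pa) $ (m - 1) = id_cell r s \<and>
        (U r * V s * Px) $ (m - 1) = jordan_cell \<mu> r s" if "s < m" for r s
  proof -
    define k where "k = m - 1 - s + r"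
    have "U r * V s * Pa = \<Phi> * (\<rho> ^ (m - 1 - s) * \<rho> ^ r) * (inverse Pa * Pa)"
      by (simp only: U_def V_def mult_ac)
    then have UVPa: "U r * V s * Pa = \<Phi> * \<rho> ^ k"
      by (simp only: k_def inv power_add mult_1_right)
    have "Px = (\<rho> + fps_const \<mu>) * Pa"
      by (simp add: \<rho>Pa distrib_right)
    then have "U r * V s * Px = (\<rho> + fps_const \<mu>) * (U r * V s * Pa)"
      by (simp only: mult_ac)
    then have UVPx: "U r * V s * Px = \<Phi> * \<rho> ^ Suc k + fps_const \<mu> * (\<Phi> * \<rho> ^ k)"
      unfolding UVPa by (simp add: algebra_simps)
    have "(k = m - 1) = (r = s)" "(Suc k = m - 1) = (s = r + 1)"
      using that by (auto simp: k_def)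
    then show ?thesis
      using \<Phi>[of k] \<Phi>[of "Suc k"] by (simp add: UVPa UVPx id_cell_def jordan_cell_def)
  qed
  then show ?thesis unfolding \<mu>_def by blast
qed

lemma toeplitz_sum_eq_fps_mult_nth:
  fixes V P :: "'a :: comm_ring_1 fps"
  assumes "1 \<le> j" "j \<le> m"
  shows "(\<Sum>k\<in>{1..m}. V $ (k - 1) * (if k \<le> j then P $ (j - k) else 0)) = (V * P) $ (j - 1)"
proof -
  have "(\<Sum>k\<in>{1..m}. V $ (k - 1) * (if k \<le> j then P $ (j - k) else 0))
      = (\<Sum>k\<in>{1..j}. V $ (k - 1) * P $ (j - k))"
    using assms by (intro sum.mono_neutral_cong_right) auto
  also have "\<dots> = (\<Sum>b\<in>{0..j - 1}. V $ b * P $ (j - 1 - b))"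
    using assms by (intro sum.reindex_bij_witness[of _ Suc "\<lambda>k. k - 1"]) auto
  finally show ?thesis by (simp add: fps_mult_nth)
qed

lemma fps_mult3_nth_as_toeplitz_sum:
  fixes U V P :: "'a :: comm_ring_1 fps"
  assumes "1 \<le> m"
  shows "(\<Sum>j\<in>{1..m}. U $ (m - j) * (\<Sum>k\<in>{1..m}. V $ (k - 1) * (if k \<le> j then P $ (j - k) else 0)))
       = (U * V * P) $ (m - 1)"
proof -
  have "(\<Sum>j\<in>{1..m}. U $ (m - j) * (\<Sum>k\<in>{1..m}. V $ (k - 1) * (if k \<le> j then P $ (j - k) else 0)))
      = (\<Sum>j\<in>{1..m}. U $ (m - j) * (V * P) $ (j - 1))"
    using toeplitz_sum_eq_fps_mult_nth[of _ m V P] by (intro sum.cong refl) auto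
  also have "\<dots> = (\<Sum>a\<in>{0..m - 1}. U $ a * (V * P) $ (m - 1 - a))"
    using assms by (intro sum.reindex_bij_witness[of _ "\<lambda>a. m - a" "\<lambda>j. m - j"]) auto
  finally show ?thesis by (simp add: fps_mult_nth mult.assoc)
qed

section \<open>A criterion for a Jordan--Kronecker basis\<close>

lemma sum_fun_apply: "(\<Sum>a\<in>A. f a) x = (\<Sum>a\<in>A. f a x)"
  by (induction A rule: infinite_finite_induct) auto

lemma inj_on_independent_family:
  fixes e :: "'s \<Rightarrow> 'k \<Rightarrow> complex"
  assumes S: "finite S"
    and indep: "\<And>c. (\<lambda>k. \<Sum>s\<in>S. c s * e s k) = (\<lambda>_. 0) \<Longrightarrow> \<forall>s\<in>S. c s = 0"
  shows "inj_on e S"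
proof (rule inj_onI, rule ccontr)
  fix s s' assume "s \<in> S" "s' \<in> S" "e s = e s'" "s \<noteq> s'"
  then have "(\<lambda>k. \<Sum>r\<in>S. ((\<lambda>r. if r = s then 1 else 0) r - (\<lambda>r. if r = s' then 1 else 0) r) * e r k) = (\<lambda>_. 0)"
    using S by (simp add: left_diff_distrib sum_subtractf if_distrib[where f="\<lambda>x. x * _"] cong: if_cong)
  then show False using indep \<open>s \<in> S\<close> \<open>s \<noteq> s'\<close> by fastforce
qed

lemma independent_family_spans:
  fixes e :: "'s \<Rightarrow> 'k \<Rightarrow> complex"
  assumes I: "finite I" and S: "finite S" and card: "card I \<le> card S"
    and supp: "\<And>s k. s \<in> S \<Longrightarrow> k \<notin> I \<Longrightarrow> e s k = 0"
    and indep: "\<And>c. (\<lambda>k. \<Sum>s\<in>S. c s * e s k) = (\<lambda>_. 0) \<Longrightarrow> \<forall>s\<in>S. c s = 0"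
    and v: "\<And>k. k \<notin> I \<Longrightarrow> v k = 0"
  shows "\<exists>c. (\<forall>s. s \<notin> S \<longrightarrow> c s = 0) \<and> v = (\<lambda>k. \<Sum>s\<in>S. c s * e s k)"
proof -
  interpret vs: vector_space "\<lambda>(c::complex) (f::'k \<Rightarrow> complex) k. c * f k"
    by unfold_locales (auto simp: algebra_simps fun_eq_iff)
  have comb: "(\<Sum>s\<in>S'. (\<lambda>k. c s * e s k)) = (\<lambda>k. \<Sum>s\<in>S'. c s * e s k)" for S' c
    by (simp add: fun_eq_iff sum_fun_apply)
  have inj: "inj_on e S"
    using S indep by (rule inj_on_independent_family)
  have "vs.independent (e ` S)"
  proof
    assume "vs.dependent (e ` S)"
    then obtain u where u: "\<exists>w\<in>e ` S. u w \<noteq> 0" "(\<Sum>w\<in>e ` S. (\<lambda>k. u w * w k)) = 0"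
      using vs.dependent_finite[OF finite_imageI[OF S]] by blast
    have "(\<lambda>k. \<Sum>s\<in>S. u (e s) * e s k) = (\<lambda>_. 0)"
      using u(2) by (simp add: sum.reindex[OF inj] comb fun_eq_iff)
    then show False using indep u(1) by fastforce
  qed
  define W where "W = (\<lambda>k l. if l = k then 1 else 0 :: complex) ` I"
  have in_span_W: "w \<in> vs.span W" if "\<And>k. k \<notin> I \<Longrightarrow> w k = 0" for w
  proof -
    have "w l = (\<Sum>k\<in>I. w k * (if l = k then 1 else 0))" for l
    proof -
      have "(\<Sum>k\<in>I. w k * (if l = k then 1 else 0)) = (\<Sum>k\<in>I. if l = k then w k else 0)"
        by (rule sum.cong) auto
      then show ?thesis using that I by simp
    qed
    then have "w = (\<Sum>k\<in>I. (\<lambda>l. w k * (if l = k then 1 else 0)))"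
      unfolding sum_fun_apply by (intro ext) blast
    also have "\<dots> \<in> vs.span W"
      by (intro vs.span_sum vs.span_scale vs.span_base) (auto simp: W_def)
    finally show ?thesis .
  qed
  have "v \<in> vs.span (e ` S)"
  proof (rule ccontr)
    assume v_notin: "v \<notin> vs.span (e ` S)"
    then have "vs.independent (insert v (e ` S))" "insert v (e ` S) \<subseteq> vs.span W"
      using \<open>vs.independent (e ` S)\<close> in_span_W v supp by (auto simp: vs.independent_insertI)
    then have "card (insert v (e ` S)) \<le> card W"
      using vs.independent_span_bound I by (auto simp: W_def)
    moreover have "card W \<le> card S" using card_image_le[OF I] card le_trans unfolding W_def by blast
    moreover have "card (insert v (e ` S)) = Suc (card S)"
      using v_notin vs.span_base S card_image[OF inj] by (metis card_insert_disjoint finite_imageI)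
    ultimately show False by simp
  qed
  then obtain u where "v = (\<Sum>w\<in>e ` S. (\<lambda>k. u w * w k))"
    using vs.span_finite[OF finite_imageI[OF S]] by auto
  then have "v = (\<lambda>k. \<Sum>s\<in>S. (\<lambda>s. if s \<in> S then u (e s) else 0) s * e s k)"
    by (simp add: sum.reindex[OF inj] comb cong: sum.cong)
  then show ?thesis by (intro exI[of _ "\<lambda>s. if s \<in> S then u (e s) else 0"]) auto
qed

lemma independent_family_is_basis:
  fixes e :: "'s \<Rightarrow> 'k \<Rightarrow> complex"
  assumes I: "finite I" and S: "finite S" and card: "card I \<le> card S"
    and supp: "\<And>s k. s \<in> S \<Longrightarrow> k \<notin> I \<Longrightarrow> e s k = 0"
    and indep: "\<And>c. (\<lambda>k. \<Sum>s\<in>S. c s * e s k) = (\<lambda>_. 0) \<Longrightarrow> \<forall>s\<in>S. c s = 0"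
  shows "is_basis_family {v. \<forall>k. k \<notin> I \<longrightarrow> v k = 0} S e"
proof -
  have uniq: "c = c'"
    if "(\<forall>s. s \<notin> S \<longrightarrow> c s = 0) \<and> v = (\<lambda>k. \<Sum>s\<in>S. c s * e s k)"
       "(\<forall>s. s \<notin> S \<longrightarrow> c' s = 0) \<and> v = (\<lambda>k. \<Sum>s\<in>S. c' s * e s k)" for v c c'
  proof -
    have "(\<lambda>k. \<Sum>s\<in>S. (c s - c' s) * e s k) = (\<lambda>_. 0)"
      using that by (simp add: left_diff_distrib sum_subtractf fun_eq_iff)
    then have "\<forall>s\<in>S. c s - c' s = 0" by (rule indep)
    with that show "c = c'" by (metis eq_iff_diff_eq_0 ext)
  qed
  show ?thesis
    unfolding is_basis_family_def
  proof (intro conjI ballI S)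
    show "e s \<in> {v. \<forall>k. k \<notin> I \<longrightarrow> v k = 0}" if "s \<in> S" for s
      using supp that by simp
    show "\<exists>!c. (\<forall>s. s \<notin> S \<longrightarrow> c s = 0) \<and> v = (\<lambda>k. \<Sum>s\<in>S. c s * e s k)"
      if "v \<in> {v. \<forall>k. k \<notin> I \<longrightarrow> v k = 0}" for v
      using independent_family_spans[OF I S card supp indep] that by (intro ex_ex1I uniq) auto
  qed
qed

lemma sum_skew_blk_left:
  assumes "m \<le> d"
  shows "(\<Sum>i<d. c i * skew_blk m M i j) =
    (if m \<le> j then (\<Sum>i<m. c i * M i (j - m)) else - (\<Sum>i<d - m. c (m + i) * M j i))"
proof -
  have split: "(\<Sum>i<d. f i) = (\<Sum>i<m. f i) + (\<Sum>i<d - m. f (m + i))" for f :: "nat \<Rightarrow> complex"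
  proof -
    have "(\<Sum>i\<in>{m..<d}. f i) = (\<Sum>i<d - m. f (m + i))"
      using assms by (intro sum.reindex_bij_witness[of _ "\<lambda>i. m + i" "\<lambda>i. i - m"]) auto
    then show ?thesis
      using sum.atLeastLessThan_concat[OF _ assms, of 0 f] by (simp add: atLeast0LessThan)
  qed
  show ?thesis
    by (auto simp: split skew_blk_def sum_negf intro!: sum.neutral sum.cong)
qed

lemma block_left_kernel_trivial:
  assumes ok: "block_ok b" and not_K1: "b \<noteq> Kron 1"
    and A: "\<And>j. j < block_dim b \<Longrightarrow> (\<Sum>i<block_dim b. c i * blockA b i j) = 0"
    and B: "\<And>j. j < block_dim b \<Longrightarrow> (\<Sum>i<block_dim b. c i * blockB b i j) = 0"
    and r: "r < block_dim b"
  shows "c r = 0"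
proof (cases b)
  case (Jor \<mu> m)
  have col: "(\<Sum>i<2 * m. c i * skew_blk m id_cell i j) = 0" if "j < 2 * m" for j
    using A[of j] B[of j] that Jor by (cases \<mu>) auto
  have zero: "c j = 0 \<and> c (m + j) = 0" if "j < m" for j
    using col[of j] col[of "m + j"] that by (simp add: sum_skew_blk_left id_cell_def of_bool_def[symmetric])
  show ?thesis
    using zero[of r] zero[of "r - m"] r Jor by (cases "r < m") simp_all
next
  case (Kron k)
  with ok not_K1 obtain m where k: "k = Suc m" "1 \<le> m"
    by (cases k) auto
  have lo: "c j = 0" if "j < m" for j
    using A[of "m + j"] that Kron k by (simp add: sum_skew_blk_left P_cell_def of_bool_def[symmetric] del: sum.lessThan_Suc)
  have mid: "c (m + j) = 0" and hi: "c (Suc (m + j)) = 0" if "j < m" for j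
    using A[of j] B[of j] that Kron k
    by (simp_all add: sum_skew_blk_left P_cell_def Q_cell_def of_bool_def[symmetric] del: sum.lessThan_Suc)
  have "r < Suc (2 * m)" using r Kron k by simp
  then consider "r < m" | "m \<le> r" "r < 2 * m" | "r = 2 * m"
    by linarith
  then show ?thesis
  proof cases
    case 1
    then show ?thesis by (rule lo)
  next
    case 2
    then show ?thesis using mid[of "r - m"] by simp
  next
    case 3
    then show ?thesis using hi[of "m - 1"] k by (simp add: mult_2)
  qed
qed

lemma sum_block_index_delta:
  assumes "b < length bl"
    and "\<And>b' i. b' < length bl \<Longrightarrow> i < block_dim (bl ! b') \<Longrightarrow> g (b', i) = (if b' = b then h i else 0)"
  shows "(\<Sum>s\<in>{(b', i). b' < length bl \<and> i < block_dim (bl ! b')}. g s) = (\<Sum>i<block_dim (bl ! b). h i)"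
proof -
  have "{(b', i). b' < length bl \<and> i < block_dim (bl ! b')} = (SIGMA b':{..<length bl}. {..<block_dim (bl ! b')})"
    by auto
  then have "(\<Sum>s\<in>{(b', i). b' < length bl \<and> i < block_dim (bl ! b')}. g s)
      = (\<Sum>b'<length bl. \<Sum>i<block_dim (bl ! b'). g (b', i))"
    by (simp add: sum.Sigma)
  also have "\<dots> = (\<Sum>b'<length bl. if b' = b then (\<Sum>i<block_dim (bl ! b). h i) else 0)"
    using assms(2) by (intro sum.cong refl) (auto intro!: sum.neutral sum.cong)
  finally show ?thesis
    using assms(1) by simp
qed

lemma JK_gram_independent:
  fixes e :: "nat \<times> nat \<Rightarrow> 'k \<Rightarrow> complex" and bl :: "jkblock list"
  defines "S \<equiv> {(b, i). b < length bl \<and> i < block_dim (bl ! b)}"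
  assumes blocks: "\<And>b. b \<in> set bl \<Longrightarrow> block_ok b \<and> b \<noteq> Kron 1"
    and linA: "\<And>(S :: (nat \<times> nat) set) c f \<eta>. A (\<lambda>k. \<Sum>s\<in>S. c s * f s k) \<eta> = (\<Sum>s\<in>S. c s * A (f s) \<eta>)"
    and linB: "\<And>(S :: (nat \<times> nat) set) c f \<eta>. B (\<lambda>k. \<Sum>s\<in>S. c s * f s k) \<eta> = (\<Sum>s\<in>S. c s * B (f s) \<eta>)"
    and gram: "\<And>b i b' j. b < length bl \<Longrightarrow> i < block_dim (bl ! b) \<Longrightarrow>
                 b' < length bl \<Longrightarrow> j < block_dim (bl ! b') \<Longrightarrow>
        A (e (b, i)) (e (b', j)) = (if b = b' then blockA (bl ! b) i j else 0) \<and>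
        B (e (b, i)) (e (b', j)) = (if b = b' then blockB (bl ! b) i j else 0)"
    and zero: "(\<lambda>k. \<Sum>s\<in>S. c s * e s k) = (\<lambda>_. 0)"
  shows "\<forall>s\<in>S. c s = 0"
proof
  fix s assume "s \<in> S"
  then obtain b r where s: "s = (b, r)" "b < length bl" "r < block_dim (bl ! b)"
    by (auto simp: S_def)
  have "A (\<lambda>_. 0) \<eta> = 0" "B (\<lambda>_. 0) \<eta> = 0" for \<eta>
    using linA[where S="{}"] linB[where S="{}"] by simp_all
  then have "(\<Sum>s\<in>S. c s * A (e s) \<eta>) = 0" "(\<Sum>s\<in>S. c s * B (e s) \<eta>) = 0" for \<eta>
    using linA[where S=S and c=c and f=e] linB[where S=S and c=c and f=e] by (simp_all add: zero)
  moreover have "(\<Sum>s\<in>S. c s * A (e s) (e (b, j))) = (\<Sum>i<block_dim (bl ! b). c (b, i) * blockA (bl ! b) i j)"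
    and "(\<Sum>s\<in>S. c s * B (e s) (e (b, j))) = (\<Sum>i<block_dim (bl ! b). c (b, i) * blockB (bl ! b) i j)"
    if "j < block_dim (bl ! b)" for j
    unfolding S_def using gram[OF _ _ s(2) that] by (auto intro!: sum_block_index_delta[OF s(2)])
  ultimately show "c s = 0"
    using block_left_kernel_trivial[of "bl ! b" "\<lambda>i. c (b, i)" r] blocks[OF nth_mem[OF s(2)]] s
    by simp
qed

lemma JK_decompositionI:
  fixes e :: "nat \<times> nat \<Rightarrow> 'k \<Rightarrow> complex"
  assumes I: "finite I" and dim: "card I \<le> sum_list (map block_dim bl)"
    and blocks: "\<And>b. b \<in> set bl \<Longrightarrow> block_ok b \<and> b \<noteq> Kron 1"
    and supp: "\<And>b i k. b < length bl \<Longrightarrow> i < block_dim (bl ! b) \<Longrightarrow> k \<notin> I \<Longrightarrow> e (b, i) k = 0"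
    and linA: "\<And>(S :: (nat \<times> nat) set) c f \<eta>. A (\<lambda>k. \<Sum>s\<in>S. c s * f s k) \<eta> = (\<Sum>s\<in>S. c s * A (f s) \<eta>)"
    and linB: "\<And>(S :: (nat \<times> nat) set) c f \<eta>. B (\<lambda>k. \<Sum>s\<in>S. c s * f s k) \<eta> = (\<Sum>s\<in>S. c s * B (f s) \<eta>)"
    and gram: "\<And>b i b' j. b < length bl \<Longrightarrow> i < block_dim (bl ! b) \<Longrightarrow>
                 b' < length bl \<Longrightarrow> j < block_dim (bl ! b') \<Longrightarrow>
        A (e (b, i)) (e (b', j)) = (if b = b' then blockA (bl ! b) i j else 0) \<and>
        B (e (b, i)) (e (b', j)) = (if b = b' then blockB (bl ! b) i j else 0)"
  shows "JK_decomposition {v. \<forall>k. k \<notin> I \<longrightarrow> v k = 0} A B bl"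
proof -
  let ?S = "{(b, i). b < length bl \<and> i < block_dim (bl ! b)}"
  have S_Sigma: "?S = (SIGMA b:{..<length bl}. {..<block_dim (bl ! b)})"
    by auto
  have "card ?S = sum_list (map block_dim bl)"
    by (simp add: S_Sigma sum_list_sum_nth atLeast0LessThan)
  moreover have "\<forall>s\<in>?S. c s = 0" if "(\<lambda>k. \<Sum>s\<in>?S. c s * e s k) = (\<lambda>_. 0)" for c
    by (rule JK_gram_independent[where A=A and B=B and e=e and bl=bl, OF blocks linA linB gram that])
  ultimately have "is_basis_family {v. \<forall>k. k \<notin> I \<longrightarrow> v k = 0} ?S e"
    using dim supp by (intro independent_family_is_basis I) (auto simp: S_Sigma)
  then show ?thesis
    unfolding JK_decomposition_def using blocks gram by blast
qed

section \<open>The Lie algebra\<close>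

lemma gI_simps [simp]:
  "G \<in> gI N p n" "H1 \<in> gI N p n" "H2 \<in> gI N p n"
  "E t i j \<in> gI N p n \<longleftrightarrow> 1 \<le> t \<and> t \<le> N \<and> 1 \<le> i \<and> i \<le> p t \<and> 1 \<le> j \<and> j \<le> n t i"
  "F t i j \<in> gI N p n \<longleftrightarrow> 1 \<le> t \<and> t \<le> N \<and> 1 \<le> i \<and> i \<le> p t \<and> 1 \<le> j \<and> j \<le> n t i"
  by (auto simp: gI_def)

definition triples :: "nat \<Rightarrow> (nat \<Rightarrow> nat) \<Rightarrow> (nat \<Rightarrow> nat \<Rightarrow> nat) \<Rightarrow> (nat \<times> nat \<times> nat) set" where
  "triples N p n = (SIGMA t:{1..N}. SIGMA i:{1..p t}. {1..n t i})"

lemma gI_eq: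
  "gI N p n = {G, H1, H2} \<union> (\<lambda>(t, i, j). E t i j) ` triples N p n \<union> (\<lambda>(t, i, j). F t i j) ` triples N p n"
  by (auto simp: gI_def triples_def image_iff)

lemma finite_gI [simp]: "finite (gI N p n)"
  by (simp add: gI_eq triples_def)

lemma sum_gI:
  "(\<Sum>a\<in>gI N p n. f a) = f G + f H1 + f H2
     + (\<Sum>t\<in>{1..N}. \<Sum>i\<in>{1..p t}. \<Sum>j\<in>{1..n t i}. f (E t i j) + f (F t i j))"
proof -
  let ?T = "triples N p n"
  have fin: "finite ?T" by (simp add: triples_def)
  have inj: "inj_on (\<lambda>(t, i, j). E t i j) ?T" "inj_on (\<lambda>(t, i, j). F t i j) ?T"
    by (auto simp: inj_on_def)
  let ?A = "{G, H1, H2}" and ?B = "(\<lambda>(t, i, j). E t i j) ` ?T" and ?C = "(\<lambda>(t, i, j). F t i j) ` ?T"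
  have "(\<Sum>a\<in>gI N p n. f a) = sum f (?A \<union> ?B) + sum f ?C"
    unfolding gI_eq using fin by (intro sum.union_disjoint) auto
  also have "sum f (?A \<union> ?B) = sum f ?A + sum f ?B"
    using fin by (intro sum.union_disjoint) auto
  also have "sum f ?B = (\<Sum>(t, i, j)\<in>?T. f (E t i j))"
    by (subst sum.reindex[OF inj(1)]) (simp add: case_prod_beta o_def)
  also have "sum f ?C = (\<Sum>(t, i, j)\<in>?T. f (F t i j))"
    by (subst sum.reindex[OF inj(2)]) (simp add: case_prod_beta o_def)
  also have "sum f ?A = f G + f H1 + f H2"
    by (simp add: add.assoc)
  finally show ?thesis
    by (simp add: triples_def sum.Sigma sum.distrib add.assoc)
qed

lemma card_gI: "card (gI N p n) = 3 + 2 * (\<Sum>t\<in>{1..N}. \<Sum>i\<in>{1..p t}. n t i)"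
proof -
  let ?T = "triples N p n"
  let ?B = "(\<lambda>(t, i, j). E t i j) ` ?T" and ?C = "(\<lambda>(t, i, j). F t i j) ` ?T"
  have fin: "finite ?T" by (simp add: triples_def)
  have inj: "inj_on (\<lambda>(t, i, j). E t i j) ?T" "inj_on (\<lambda>(t, i, j). F t i j) ?T"
    by (auto simp: inj_on_def)
  have "card (gI N p n) = card ({G, H1, H2} \<union> ?B) + card ?C"
    unfolding gI_eq using fin by (intro card_Un_disjoint) auto
  also have "card ({G, H1, H2} \<union> ?B) = card {G, H1, H2} + card ?B"
    using fin by (intro card_Un_disjoint) auto
  also have "card ?T = (\<Sum>t\<in>{1..N}. \<Sum>i\<in>{1..p t}. n t i)"
    by (simp add: triples_def)
  ultimately show ?thesis
    by (simp add: card_image[OF inj(1)] card_image[OF inj(2)])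
qed

fun base_br_eval :: "(nat \<Rightarrow> complex) \<Rightarrow> (nat \<Rightarrow> complex) \<Rightarrow> gidx \<Rightarrow> gidx \<Rightarrow> (gidx \<Rightarrow> complex) \<Rightarrow> complex" where
  "base_br_eval \<alpha> \<beta> G H1 f = f H1"
| "base_br_eval \<alpha> \<beta> G H2 f = f H2"
| "base_br_eval \<alpha> \<beta> G (E t i k) f = f (E t i k)"
| "base_br_eval \<alpha> \<beta> (E t i j) (F t' i' k) f =
     (if t = t' \<and> i = i' then
        (if k < j then f (E t i (j - k)) else if j = k then \<alpha> t * f H1 + \<beta> t * f H2 else 0)
      else 0)"
| "base_br_eval \<alpha> \<beta> _ _ f = 0"

lemma sum_unit_vec: "(\<Sum>l\<in>gI N p n. unit_vec a l * f l) = (if a \<in> gI N p n then f a else 0)"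
proof -
  have "(\<Sum>l\<in>gI N p n. unit_vec a l * f l) = (\<Sum>l\<in>gI N p n. if a = l then f l else 0)"
    by (rule sum.cong) (auto simp: unit_vec_def)
  then show ?thesis by simp
qed

lemma sum_base_br:
  assumes "a \<in> gI N p n" "b \<in> gI N p n"
  shows "(\<Sum>l\<in>gI N p n. base_br \<alpha> \<beta> a b l * f l) = base_br_eval \<alpha> \<beta> a b f"
  using assms
  by (cases a; cases b)
     (auto simp: sum_unit_vec sum.distrib distrib_right mult.assoc simp flip: sum_distrib_left)

lemma sum_basis_br:
  assumes "a \<in> gI N p n" "b \<in> gI N p n"
  shows "(\<Sum>l\<in>gI N p n. basis_br \<alpha> \<beta> a b l * f l) = base_br_eval \<alpha> \<beta> a b f - base_br_eval \<alpha> \<beta> b a f"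
  using sum_base_br[OF assms] sum_base_br[OF assms(2,1)]
  by (simp add: basis_br_def left_diff_distrib sum_subtractf)

definition double_br :: "(nat \<Rightarrow> complex) \<Rightarrow> (nat \<Rightarrow> complex) \<Rightarrow> gidx \<Rightarrow> gidx \<Rightarrow> gidx \<Rightarrow> gidx \<Rightarrow> complex" where
  "double_br \<alpha> \<beta> a c d l =
     base_br_eval \<alpha> \<beta> c d (\<lambda>b. basis_br \<alpha> \<beta> a b l) - base_br_eval \<alpha> \<beta> d c (\<lambda>b. basis_br \<alpha> \<beta> a b l)"

definition jacobiator :: "(nat \<Rightarrow> complex) \<Rightarrow> (nat \<Rightarrow> complex) \<Rightarrow> gidx \<Rightarrow> gidx \<Rightarrow> gidx \<Rightarrow> gidx \<Rightarrow> complex" where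
  "jacobiator \<alpha> \<beta> a c d l = double_br \<alpha> \<beta> a c d l + double_br \<alpha> \<beta> c d a l + double_br \<alpha> \<beta> d a c l"

lemma jacobiator_cycle: "jacobiator \<alpha> \<beta> a c d l = jacobiator \<alpha> \<beta> c d a l"
  by (simp add: jacobiator_def ac_simps)

text \<open>The only triples that need an argument: \<open>ad f_k\<close> and \<open>ad f_k'\<close> commute on the \<open>e\<close>'s.
  This fails for \<open>k = 0\<close>, which is why the indices must lie in \<open>gI\<close>.\<close>
lemma jacobiator_E_F_F:
  assumes "1 \<le> k" "1 \<le> k'"
  shows "jacobiator \<alpha> \<beta> (E t i j) (F t1 i1 k) (F t2 i2 k') l = 0"
  using assms unfolding jacobiator_def double_br_def basis_br_def
  by (cases "t = t1 \<and> i = i1"; cases "t1 = t2 \<and> i1 = i2"; cases "k + k' < j"; cases "j = k + k'")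
     (auto simp: unit_vec_def if_distribR less_diff_conv le_imp_diff_is_add add.commute
        cong: if_cong split del: if_split)

lemma jacobiator_basis:
  assumes "a \<in> gI N p n" "c \<in> gI N p n" "d \<in> gI N p n"
  shows "jacobiator \<alpha> \<beta> a c d l = 0"
proof -
  have EFF: "jacobiator \<alpha> \<beta> (E t i j) (F t1 i1 k) (F t2 i2 k') l = 0"
    "jacobiator \<alpha> \<beta> (F t1 i1 k) (F t2 i2 k') (E t i j) l = 0"
    "jacobiator \<alpha> \<beta> (F t2 i2 k') (E t i j) (F t1 i1 k) l = 0"
    if "1 \<le> k" "1 \<le> k'" for t i j t1 i1 k t2 i2 k'
    using jacobiator_E_F_F[OF that] jacobiator_cycle by metis+
  show ?thesis
    using assms
    by (cases a; cases c; cases d)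
       (simp_all add: EFF, simp_all add: jacobiator_def double_br_def basis_br_def unit_vec_def if_distribR
          cong: if_cong split del: if_split)
qed

lemma base_br_outside:
  "a \<in> gI N p n \<Longrightarrow> b \<in> gI N p n \<Longrightarrow> l \<notin> gI N p n \<Longrightarrow> base_br \<alpha> \<beta> a b l = 0"
  by (cases a; cases b) (auto simp: unit_vec_def)

lemma gbr_gbr:
  "gbr N p n \<alpha> \<beta> x (gbr N p n \<alpha> \<beta> y z) l =
     (\<Sum>a\<in>gI N p n. \<Sum>c\<in>gI N p n. \<Sum>d\<in>gI N p n. x a * y c * z d * double_br \<alpha> \<beta> a c d l)"
proof -
  let ?I = "gI N p n"
  have "gbr N p n \<alpha> \<beta> x (gbr N p n \<alpha> \<beta> y z) l =
      (\<Sum>a\<in>?I. \<Sum>b\<in>?I. \<Sum>c\<in>?I. \<Sum>d\<in>?I. x a * y c * z d * (basis_br \<alpha> \<beta> c d b * basis_br \<alpha> \<beta> a b l))"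
    by (simp add: gbr_def sum_distrib_left sum_distrib_right mult_ac)
  also have "\<dots> = (\<Sum>a\<in>?I. \<Sum>c\<in>?I. \<Sum>b\<in>?I. \<Sum>d\<in>?I. x a * y c * z d * (basis_br \<alpha> \<beta> c d b * basis_br \<alpha> \<beta> a b l))"
    by (rule sum.cong[OF refl], rule sum.swap)
  also have "\<dots> = (\<Sum>a\<in>?I. \<Sum>c\<in>?I. \<Sum>d\<in>?I. \<Sum>b\<in>?I. x a * y c * z d * (basis_br \<alpha> \<beta> c d b * basis_br \<alpha> \<beta> a b l))"
    by (rule sum.cong[OF refl], rule sum.cong[OF refl], rule sum.swap)
  also have "\<dots> = (\<Sum>a\<in>?I. \<Sum>c\<in>?I. \<Sum>d\<in>?I. x a * y c * z d * double_br \<alpha> \<beta> a c d l)"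
    by (intro sum.cong refl) (simp add: double_br_def sum_basis_br flip: sum_distrib_left)
  finally show ?thesis .
qed

lemma is_lie_algebra_gspace: "is_lie_algebra (gspace N p n) (gbr N p n \<alpha> \<beta>)"
  unfolding is_lie_algebra_def
proof (intro conjI ballI allI)
  let ?I = "gI N p n" and ?br = "gbr N p n \<alpha> \<beta>"
  fix x y z :: "gidx \<Rightarrow> complex" and c :: complex
  show "?br x y \<in> gspace N p n"
    by (auto simp: gspace_def gbr_def basis_br_def base_br_outside intro!: sum.neutral)
  show "?br (\<lambda>k. x k + c * y k) z = (\<lambda>k. ?br x z k + c * ?br y z k)"
    and "?br z (\<lambda>k. x k + c * y k) = (\<lambda>k. ?br z x k + c * ?br z y k)"
    by (simp_all add: gbr_def sum.distrib sum_distrib_left algebra_simps)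
  have "(\<Sum>a\<in>?I. \<Sum>b\<in>?I. x a * x b * base_br \<alpha> \<beta> b a l)
      = (\<Sum>a\<in>?I. \<Sum>b\<in>?I. x a * x b * base_br \<alpha> \<beta> a b l)" for l
    by (subst sum.swap) (simp add: mult.commute)
  then show "?br x x = (\<lambda>_. 0)"
    by (simp add: fun_eq_iff gbr_def basis_br_def right_diff_distrib sum_subtractf)
  have "?br x (?br y z) l + ?br y (?br z x) l + ?br z (?br x y) l =
      (\<Sum>a\<in>?I. \<Sum>c\<in>?I. \<Sum>d\<in>?I. x a * y c * z d * jacobiator \<alpha> \<beta> a c d l)" for l
  proof -
    have "?br y (?br z x) l = (\<Sum>c\<in>?I. \<Sum>a\<in>?I. \<Sum>d\<in>?I. y c * z d * x a * double_br \<alpha> \<beta> c d a l)"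
      unfolding gbr_gbr by (rule sum.cong[OF refl], rule sum.swap)
    also have "\<dots> = (\<Sum>a\<in>?I. \<Sum>c\<in>?I. \<Sum>d\<in>?I. x a * y c * z d * double_br \<alpha> \<beta> c d a l)"
      by (subst sum.swap) (simp add: mult_ac)
    finally have 2: "?br y (?br z x) l = \<dots>" .
    have "?br z (?br x y) l = (\<Sum>a\<in>?I. \<Sum>d\<in>?I. \<Sum>c\<in>?I. z d * x a * y c * double_br \<alpha> \<beta> d a c l)"
      unfolding gbr_gbr by (rule sum.swap)
    also have "\<dots> = (\<Sum>a\<in>?I. \<Sum>c\<in>?I. \<Sum>d\<in>?I. x a * y c * z d * double_br \<alpha> \<beta> d a c l)"
      by (rule sum.cong[OF refl], subst sum.swap, simp add: mult_ac)
    finally have 3: "?br z (?br x y) l = \<dots>" .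
    show ?thesis
      unfolding 2 3 by (simp add: gbr_gbr jacobiator_def sum.distrib algebra_simps)
  qed
  then show "(\<lambda>k. ?br x (?br y z) k + ?br y (?br z x) k + ?br z (?br x y) k) = (\<lambda>_. 0)"
    by (simp add: fun_eq_iff jacobiator_basis)
qed

section \<open>The pencil of forms\<close>

lemma image_mset_mset_set_eq_sum: "finite A \<Longrightarrow> image_mset f (mset_set A) = (\<Sum>q\<in>A. {#f q#})"
  by (induction A rule: finite_induct) auto

definition hvec :: "complex \<Rightarrow> complex \<Rightarrow> gidx \<Rightarrow> complex" where
  "hvec c1 c2 l = (if l = H1 then c1 else if l = H2 then c2 else 0)"

lemma hvec_simps [simp]:
  "hvec c1 c2 G = 0" "hvec c1 c2 H1 = c1" "hvec c1 c2 H2 = c2"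
  "hvec c1 c2 (E t i j) = 0" "hvec c1 c2 (F t i j) = 0"
  by (simp_all add: hvec_def)

lemma unit_vec_G_simps [simp]:
  "unit_vec G G = 1" "unit_vec G H1 = 0" "unit_vec G H2 = 0"
  "unit_vec G (E t i j) = 0" "unit_vec G (F t i j) = 0"
  by (simp_all add: unit_vec_def)

text \<open>The element of \<open>span(h1, h2)\<close> on which \<open>x\<close> and \<open>a\<close> take the values \<open>cx\<close> and \<open>ca\<close>
  (Cramer's rule; meaningful when \<open>x H1 * a H2 - x H2 * a H1 \<noteq> 0\<close>).\<close>
definition hsolve :: "(gidx \<Rightarrow> complex) \<Rightarrow> (gidx \<Rightarrow> complex) \<Rightarrow> complex \<Rightarrow> complex \<Rightarrow> gidx \<Rightarrow> complex" where
  "hsolve x a cx ca = hvec ((a H2 * cx - x H2 * ca) / (x H1 * a H2 - x H2 * a H1))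
                           ((x H1 * ca - a H1 * cx) / (x H1 * a H2 - x H2 * a H1))"

lemma hsolve_simps [simp]:
  "hsolve x a cx ca G = 0" "hsolve x a cx ca (E t i j) = 0" "hsolve x a cx ca (F t i j) = 0"
  by (simp_all add: hsolve_def)

locale jordan_tuple_algebra =
  fixes N :: nat and p :: "nat \<Rightarrow> nat" and n :: "nat \<Rightarrow> nat \<Rightarrow> nat" and \<alpha> \<beta> :: "nat \<Rightarrow> complex"
begin

abbreviation A :: "(gidx \<Rightarrow> complex) \<Rightarrow> (gidx \<Rightarrow> complex) \<Rightarrow> (gidx \<Rightarrow> complex) \<Rightarrow> complex" where
  "A \<equiv> formA N p n \<alpha> \<beta>"

text \<open>\<open>g_pair y \<eta> = \<langle>y, [g, \<eta>]\<rangle>\<close>, and \<open>ef_pair y t i \<xi> \<eta>\<close> collects the brackets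
  [e^i_tj, f^i_tk] in \<open>\<langle>y, [\<xi>, \<eta>]\<rangle>\<close>.\<close>
definition g_pair :: "(gidx \<Rightarrow> complex) \<Rightarrow> (gidx \<Rightarrow> complex) \<Rightarrow> complex" where
  "g_pair y \<eta> = y H1 * \<eta> H1 + y H2 * \<eta> H2
     + (\<Sum>t\<in>{1..N}. \<Sum>i\<in>{1..p t}. \<Sum>j\<in>{1..n t i}. y (E t i j) * \<eta> (E t i j))"

definition ef_pair :: "(gidx \<Rightarrow> complex) \<Rightarrow> nat \<Rightarrow> nat \<Rightarrow> (gidx \<Rightarrow> complex) \<Rightarrow> (gidx \<Rightarrow> complex) \<Rightarrow> complex" where
  "ef_pair y t i \<xi> \<eta> =
     (\<Sum>j\<in>{1..n t i}. \<Sum>k\<in>{1..n t i}. \<xi> (E t i j) * \<eta> (F t i k) * base_br_eval \<alpha> \<beta> (E t i j) (F t i k) y)"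

lemma sum_blocks_delta:
  assumes "t0 \<in> {1..N}" "i0 \<in> {1..p t0}"
  shows "(\<Sum>t\<in>{1..N}. \<Sum>i\<in>{1..p t}. if t0 = t \<and> i0 = i then g t i else 0) = g t0 i0"
proof -
  have "(\<Sum>t\<in>{1..N}. \<Sum>i\<in>{1..p t}. if t0 = t \<and> i0 = i then g t i else 0)
      = (\<Sum>t\<in>{1..N}. if t0 = t then g t0 i0 else 0)"
    using assms by (intro sum.cong refl) auto
  then show ?thesis using assms by simp
qed

lemma sum_gI_base_br_eval_E:
  assumes "t \<in> {1..N}" "i \<in> {1..p t}"
  shows "(\<Sum>b\<in>gI N p n. \<eta> b * base_br_eval \<alpha> \<beta> (E t i j) b y)
       = (\<Sum>k\<in>{1..n t i}. \<eta> (F t i k) * base_br_eval \<alpha> \<beta> (E t i j) (F t i k) y)"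
proof -
  have "(\<Sum>b\<in>gI N p n. \<eta> b * base_br_eval \<alpha> \<beta> (E t i j) b y)
      = (\<Sum>t'\<in>{1..N}. \<Sum>i'\<in>{1..p t'}. if t = t' \<and> i = i' then
           (\<Sum>k\<in>{1..n t i}. \<eta> (F t i k) * base_br_eval \<alpha> \<beta> (E t i j) (F t i k) y) else 0)"
    by (simp add: sum_gI del: base_br_eval.simps(4)) (intro sum.cong refl; auto)
  also have "\<dots> = (\<Sum>k\<in>{1..n t i}. \<eta> (F t i k) * base_br_eval \<alpha> \<beta> (E t i j) (F t i k) y)"
    by (rule sum_blocks_delta[OF assms])
  finally show ?thesis .
qed

lemma formA_explicit:
  "A y \<xi> \<eta> = \<xi> G * g_pair y \<eta> - \<eta> G * g_pair y \<xi>
     + (\<Sum>t\<in>{1..N}. \<Sum>i\<in>{1..p t}. ef_pair y t i \<xi> \<eta> - ef_pair y t i \<eta> \<xi>)"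
proof -
  let ?I = "gI N p n"
  define Q where "Q \<xi> \<eta> = (\<Sum>a\<in>?I. \<Sum>b\<in>?I. \<xi> a * \<eta> b * base_br_eval \<alpha> \<beta> a b y)" for \<xi> \<eta>
  have Q_expand: "Q \<xi> \<eta> = \<xi> G * g_pair y \<eta> + (\<Sum>t\<in>{1..N}. \<Sum>i\<in>{1..p t}. ef_pair y t i \<xi> \<eta>)"
    for \<xi> \<eta>
  proof -
    have row_G: "(\<Sum>b\<in>?I. \<eta> b * base_br_eval \<alpha> \<beta> G b y) = g_pair y \<eta>"
      by (simp add: sum_gI g_pair_def mult.commute)
    have "Q \<xi> \<eta> = (\<Sum>a\<in>?I. \<xi> a * (\<Sum>b\<in>?I. \<eta> b * base_br_eval \<alpha> \<beta> a b y))"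
      by (simp add: Q_def sum_distrib_left mult_ac)
    also have "\<dots> = \<xi> G * g_pair y \<eta> + (\<Sum>t\<in>{1..N}. \<Sum>i\<in>{1..p t}. \<Sum>j\<in>{1..n t i}.
        \<xi> (E t i j) * (\<Sum>k\<in>{1..n t i}. \<eta> (F t i k) * base_br_eval \<alpha> \<beta> (E t i j) (F t i k) y))"
      unfolding sum_gI[of "\<lambda>a. \<xi> a * _ a"] row_G
      by (simp del: base_br_eval.simps(4)) (intro sum.cong refl, simp add: sum_gI_base_br_eval_E)
    also have "\<dots> = \<xi> G * g_pair y \<eta> + (\<Sum>t\<in>{1..N}. \<Sum>i\<in>{1..p t}. ef_pair y t i \<xi> \<eta>)"
      by (simp add: ef_pair_def sum_distrib_left mult_ac)
    finally show ?thesis .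
  qed
  have "A y \<xi> \<eta> = (\<Sum>l\<in>?I. \<Sum>a\<in>?I. \<Sum>b\<in>?I. \<xi> a * \<eta> b * (basis_br \<alpha> \<beta> a b l * y l))"
    by (simp add: formA_def gbr_def sum_distrib_left sum_distrib_right mult_ac)
  also have "\<dots> = (\<Sum>a\<in>?I. \<Sum>b\<in>?I. \<Sum>l\<in>?I. \<xi> a * \<eta> b * (basis_br \<alpha> \<beta> a b l * y l))"
    by (subst sum.swap, rule sum.cong[OF refl], rule sum.swap)
  also have "\<dots> = (\<Sum>a\<in>?I. \<Sum>b\<in>?I. \<xi> a * \<eta> b * (base_br_eval \<alpha> \<beta> a b y - base_br_eval \<alpha> \<beta> b a y))"
    by (intro sum.cong refl) (simp add: sum_basis_br flip: sum_distrib_left)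
  also have "\<dots> = Q \<xi> \<eta> - (\<Sum>a\<in>?I. \<Sum>b\<in>?I. \<xi> a * \<eta> b * base_br_eval \<alpha> \<beta> b a y)"
    by (simp add: Q_def right_diff_distrib sum_subtractf)
  also have "(\<Sum>a\<in>?I. \<Sum>b\<in>?I. \<xi> a * \<eta> b * base_br_eval \<alpha> \<beta> b a y) = Q \<eta> \<xi>"
    unfolding Q_def by (subst sum.swap) (simp add: mult_ac)
  finally show ?thesis
    by (simp add: Q_expand sum_subtractf algebra_simps)
qed

lemma formA_antisym: "A y \<eta> \<xi> = - A y \<xi> \<eta>"
  by (simp add: formA_explicit sum_subtractf algebra_simps)

lemma formA_sum_left: "A y (\<lambda>k. \<Sum>s\<in>S. c s * f s k) \<eta> = (\<Sum>s\<in>S. c s * A y (f s) \<eta>)"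
proof -
  let ?I = "gI N p n"
  have expand: "A y \<xi> \<eta> = (\<Sum>a\<in>?I. \<xi> a * (\<Sum>b\<in>?I. \<Sum>l\<in>?I. \<eta> b * basis_br \<alpha> \<beta> a b l * y l))" for \<xi>
  proof -
    have "A y \<xi> \<eta> = (\<Sum>l\<in>?I. \<Sum>a\<in>?I. \<Sum>b\<in>?I. \<xi> a * (\<eta> b * basis_br \<alpha> \<beta> a b l * y l))"
      by (simp add: formA_def gbr_def sum_distrib_left sum_distrib_right mult_ac)
    also have "\<dots> = (\<Sum>a\<in>?I. \<Sum>b\<in>?I. \<Sum>l\<in>?I. \<xi> a * (\<eta> b * basis_br \<alpha> \<beta> a b l * y l))"
      by (subst sum.swap, rule sum.cong[OF refl], rule sum.swap)
    finally show ?thesis by (simp add: sum_distrib_left)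
  qed
  show ?thesis
    unfolding expand by (simp add: sum_distrib_left sum_distrib_right mult_ac sum.swap[of _ S])
qed

lemma g_pair_unit_G [simp]: "g_pair y (unit_vec G) = 0"
  by (simp add: g_pair_def)

lemma ef_pair_no_E: "(\<And>t i j. \<xi> (E t i j) = 0) \<Longrightarrow> ef_pair y t i \<xi> \<eta> = 0"
  by (simp add: ef_pair_def)

lemma ef_pair_no_F: "(\<And>t i k. \<eta> (F t i k) = 0) \<Longrightarrow> ef_pair y t i \<xi> \<eta> = 0"
  by (simp add: ef_pair_def)

lemma formA_unit_G_left: "A y (unit_vec G) \<eta> = g_pair y \<eta>"
  by (simp add: formA_explicit ef_pair_no_E ef_pair_no_F)

lemma formA_no_G:
  "\<xi> G = 0 \<Longrightarrow> \<eta> G = 0 \<Longrightarrow>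
    A y \<xi> \<eta> = (\<Sum>t\<in>{1..N}. \<Sum>i\<in>{1..p t}. ef_pair y t i \<xi> \<eta> - ef_pair y t i \<eta> \<xi>)"
  by (simp add: formA_explicit)

lemma formA_isotropic:
  assumes "\<xi> G = 0" "\<eta> G = 0"
    and "(\<forall>t i j. \<xi> (E t i j) = 0) \<or> (\<forall>t i k. \<eta> (F t i k) = 0)"
    and "(\<forall>t i j. \<eta> (E t i j) = 0) \<or> (\<forall>t i k. \<xi> (F t i k) = 0)"
  shows "A y \<xi> \<eta> = 0"
  using assms by (auto simp: formA_no_G ef_pair_no_E ef_pair_no_F)

definition evec :: "nat \<Rightarrow> nat \<Rightarrow> (nat \<Rightarrow> complex) \<Rightarrow> gidx \<Rightarrow> complex" where
  "evec t0 i0 u l = (case l of E t i j \<Rightarrow> if t = t0 \<and> i = i0 \<and> j \<in> {1..n t0 i0} then u j else 0 | _ \<Rightarrow> 0)"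

definition fvec :: "nat \<Rightarrow> nat \<Rightarrow> (nat \<Rightarrow> complex) \<Rightarrow> gidx \<Rightarrow> complex" where
  "fvec t0 i0 w l = (case l of F t i k \<Rightarrow> if t = t0 \<and> i = i0 \<and> k \<in> {1..n t0 i0} then w k else 0 | _ \<Rightarrow> 0)"

lemma evec_simps [simp]:
  "evec t0 i0 u G = 0" "evec t0 i0 u H1 = 0" "evec t0 i0 u H2 = 0" "evec t0 i0 u (F t i k) = 0"
  "evec t0 i0 u (E t i j) = (if t = t0 \<and> i = i0 \<and> j \<in> {1..n t0 i0} then u j else 0)"
  by (simp_all add: evec_def)

lemma fvec_simps [simp]:
  "fvec t0 i0 w G = 0" "fvec t0 i0 w H1 = 0" "fvec t0 i0 w H2 = 0" "fvec t0 i0 w (E t i j) = 0"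
  "fvec t0 i0 w (F t i k) = (if t = t0 \<and> i = i0 \<and> k \<in> {1..n t0 i0} then w k else 0)"
  by (simp_all add: fvec_def)

lemma g_pair_hvec [simp]: "g_pair y (hvec c1 c2) = y H1 * c1 + y H2 * c2"
  by (simp add: g_pair_def)

lemma g_pair_hsolve:
  assumes "x H1 * a H2 - x H2 * a H1 \<noteq> 0"
  shows "g_pair x (hsolve x a cx ca) = cx" and "g_pair a (hsolve x a cx ca) = ca"
  using assms by (simp add: hsolve_def divide_simps, algebra)+

lemma g_pair_fvec [simp]: "g_pair y (fvec t0 i0 w) = 0"
  by (simp add: g_pair_def)

lemma g_pair_diff: "g_pair y (\<lambda>l. \<xi> l - \<zeta> l) = g_pair y \<xi> - g_pair y \<zeta>"
  by (simp add: g_pair_def algebra_simps sum_subtractf)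

lemma sum_ef_pair_evec_fvec:
  assumes "t0 \<in> {1..N}" "i0 \<in> {1..p t0}"
  shows "(\<Sum>t\<in>{1..N}. \<Sum>i\<in>{1..p t}. ef_pair y t i (evec t0 i0 u) (fvec t1 i1 w))
    = (if t1 = t0 \<and> i1 = i0 then (\<Sum>j\<in>{1..n t0 i0}. \<Sum>k\<in>{1..n t0 i0}.
         u j * w k * base_br_eval \<alpha> \<beta> (E t0 i0 j) (F t0 i0 k) y) else 0)"
proof -
  have "(\<Sum>t\<in>{1..N}. \<Sum>i\<in>{1..p t}. ef_pair y t i (evec t0 i0 u) (fvec t1 i1 w))
    = (\<Sum>t\<in>{1..N}. \<Sum>i\<in>{1..p t}. if t0 = t \<and> i0 = i then
         (if t1 = t0 \<and> i1 = i0 then (\<Sum>j\<in>{1..n t0 i0}. \<Sum>k\<in>{1..n t0 i0}.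
           u j * w k * base_br_eval \<alpha> \<beta> (E t0 i0 j) (F t0 i0 k) y) else 0) else 0)"
    unfolding ef_pair_def by (intro sum.cong refl) (auto simp del: base_br_eval.simps(4))
  also have "\<dots> = (if t1 = t0 \<and> i1 = i0 then (\<Sum>j\<in>{1..n t0 i0}. \<Sum>k\<in>{1..n t0 i0}.
         u j * w k * base_br_eval \<alpha> \<beta> (E t0 i0 j) (F t0 i0 k) y) else 0)"
    by (rule sum_blocks_delta[OF assms])
  finally show ?thesis .
qed

text \<open>Correcting \<open>\<xi>\<close> by an element of \<open>span(h1, h2)\<close> makes it pair trivially with \<open>g\<close> under
  both forms and does not change its pairings with the \<open>f\<close>'s.\<close>
definition kron_orth :: "(gidx \<Rightarrow> complex) \<Rightarrow> (gidx \<Rightarrow> complex) \<Rightarrow> (gidx \<Rightarrow> complex) \<Rightarrow> gidx \<Rightarrow> complex" where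
  "kron_orth x a \<xi> l = \<xi> l - hsolve x a (g_pair x \<xi>) (g_pair a \<xi>) l"

lemma kron_orth_simps [simp]:
  "kron_orth x a \<xi> G = \<xi> G" "kron_orth x a \<xi> (E t i j) = \<xi> (E t i j)" "kron_orth x a \<xi> (F t i j) = \<xi> (F t i j)"
  by (simp_all add: kron_orth_def)

lemma g_pair_kron_orth:
  assumes "x H1 * a H2 - x H2 * a H1 \<noteq> 0"
  shows "g_pair x (kron_orth x a \<xi>) = 0" "g_pair a (kron_orth x a \<xi>) = 0"
  using g_pair_hsolve[OF assms] by (simp_all add: kron_orth_def[abs_def] g_pair_diff)

lemma ef_pair_kron_orth [simp]: "ef_pair y t i (kron_orth x a \<xi>) \<eta> = ef_pair y t i \<xi> \<eta>"
  by (simp add: ef_pair_def)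

definition hval :: "(gidx \<Rightarrow> complex) \<Rightarrow> nat \<Rightarrow> complex" where
  "hval y t = \<alpha> t * y H1 + \<beta> t * y H2"

definition block_fps :: "(gidx \<Rightarrow> complex) \<Rightarrow> nat \<Rightarrow> nat \<Rightarrow> complex fps" where
  "block_fps y t i = Abs_fps (\<lambda>d. if d = 0 then hval y t else y (E t i d))"

lemma block_fps_nth: "block_fps y t i $ d = (if d = 0 then hval y t else y (E t i d))"
  by (simp add: block_fps_def)

lemma base_br_eval_E_F:
  "1 \<le> j \<Longrightarrow> 1 \<le> k \<Longrightarrow>
    base_br_eval \<alpha> \<beta> (E t i j) (F t i k) y = (if k \<le> j then block_fps y t i $ (j - k) else 0)"
  by (auto simp: block_fps_nth hval_def)

lemma formA_evec_fvec:
  assumes "t \<in> {1..N}" "i \<in> {1..p t}" "1 \<le> n t i"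
  shows "A y (kron_orth x a (evec t i (\<lambda>j. U $ (n t i - j)))) (fvec t' i' (\<lambda>k. V $ (k - 1)))
    = (if t' = t \<and> i' = i then (U * V * block_fps y t i) $ (n t i - 1) else 0)"
proof -
  let ?u = "\<lambda>j. U $ (n t i - j)" and ?w = "\<lambda>k. V $ (k - 1)"
  have "A y (kron_orth x a (evec t i ?u)) (fvec t' i' ?w)
      = (\<Sum>s\<in>{1..N}. \<Sum>h\<in>{1..p s}. ef_pair y s h (evec t i ?u) (fvec t' i' ?w))"
    by (simp add: formA_no_G ef_pair_no_E)
  also have "\<dots> = (if t' = t \<and> i' = i then (\<Sum>j\<in>{1..n t i}. \<Sum>k\<in>{1..n t i}.
      ?u j * ?w k * base_br_eval \<alpha> \<beta> (E t i j) (F t i k) y) else 0)"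
    by (rule sum_ef_pair_evec_fvec[OF assms(1,2)])
  also have "(\<Sum>j\<in>{1..n t i}. \<Sum>k\<in>{1..n t i}. ?u j * ?w k * base_br_eval \<alpha> \<beta> (E t i j) (F t i k) y)
      = (\<Sum>j\<in>{1..n t i}. ?u j * (\<Sum>k\<in>{1..n t i}. ?w k * (if k \<le> j then block_fps y t i $ (j - k) else 0)))"
    by (intro sum.cong refl) (auto simp: base_br_eval_E_F sum_distrib_left mult_ac simp del: base_br_eval.simps(4))
  also have "\<dots> = (U * V * block_fps y t i) $ (n t i - 1)"
    by (rule fps_mult3_nth_as_toeplitz_sum[OF assms(3)])
  finally show ?thesis .
qed

text \<open>The last condition says that \<open>block_fps x t i / block_fps a t i\<close> minus its constant term has
  order exactly one, as required by \<open>fps_pencil_jordan_basis\<close>.\<close>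
definition generic :: "(gidx \<Rightarrow> complex) \<Rightarrow> (gidx \<Rightarrow> complex) \<Rightarrow> bool" where
  "generic x a \<longleftrightarrow> x H1 * a H2 - x H2 * a H1 \<noteq> 0 \<and> (\<forall>t\<in>{1..N}. hval a t \<noteq> 0) \<and>
     (\<forall>t\<in>{1..N}. \<forall>i\<in>{1..p t}. x (E t i 1) * hval a t - a (E t i 1) * hval x t \<noteq> 0)"

definition jordan_coeffs :: "(gidx \<Rightarrow> complex) \<Rightarrow> (gidx \<Rightarrow> complex) \<Rightarrow> nat \<Rightarrow> nat
    \<Rightarrow> (nat \<Rightarrow> complex fps) \<times> (nat \<Rightarrow> complex fps)" where
  "jordan_coeffs x a t i = (SOME UV. \<forall>r<n t i. \<forall>s<n t i.
     (fst UV r * snd UV s * block_fps a t i) $ (n t i - 1) = id_cell r s \<and>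
     (fst UV r * snd UV s * block_fps x t i) $ (n t i - 1) = jordan_cell (hval x t / hval a t) r s)"

lemma jordan_coeffs:
  assumes "generic x a" "t \<in> {1..N}" "i \<in> {1..p t}" "r < n t i" "s < n t i"
  defines "U \<equiv> fst (jordan_coeffs x a t i)" and "V \<equiv> snd (jordan_coeffs x a t i)"
  shows "(U r * V s * block_fps a t i) $ (n t i - 1) = id_cell r s"
    and "(U r * V s * block_fps x t i) $ (n t i - 1) = jordan_cell (hval x t / hval a t) r s"
proof -
  have "block_fps a t i $ 0 \<noteq> 0"
    and "block_fps x t i $ 1 * block_fps a t i $ 0 - block_fps a t i $ 1 * block_fps x t i $ 0 \<noteq> 0"
    using assms(1-3) by (auto simp: generic_def block_fps_nth)
  from fps_pencil_jordan_basis[OF this, of "n t i"]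
  have "\<exists>UV. \<forall>r<n t i. \<forall>s<n t i.
     (fst UV r * snd UV s * block_fps a t i) $ (n t i - 1) = id_cell r s \<and>
     (fst UV r * snd UV s * block_fps x t i) $ (n t i - 1) = jordan_cell (hval x t / hval a t) r s"
    by (simp add: block_fps_nth)
  then have "\<forall>r<n t i. \<forall>s<n t i.
     (U r * V s * block_fps a t i) $ (n t i - 1) = id_cell r s \<and>
     (U r * V s * block_fps x t i) $ (n t i - 1) = jordan_cell (hval x t / hval a t) r s"
    unfolding U_def V_def jordan_coeffs_def by (rule someI_ex)
  then show "(U r * V s * block_fps a t i) $ (n t i - 1) = id_cell r s"
    and "(U r * V s * block_fps x t i) $ (n t i - 1) = jordan_cell (hval x t / hval a t) r s"
    using assms(4,5) by auto
qed

definition kron_vec :: "(gidx \<Rightarrow> complex) \<Rightarrow> (gidx \<Rightarrow> complex) \<Rightarrow> nat \<Rightarrow> gidx \<Rightarrow> complex" where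
  "kron_vec x a r = (if r = 0 then unit_vec G else if r = 1 then hsolve x a 1 0 else hsolve x a 0 1)"

definition jordan_vec :: "(gidx \<Rightarrow> complex) \<Rightarrow> (gidx \<Rightarrow> complex) \<Rightarrow> nat \<Rightarrow> nat \<Rightarrow> nat \<Rightarrow> gidx \<Rightarrow> complex" where
  "jordan_vec x a t i r =
     (if r < n t i then kron_orth x a (evec t i (\<lambda>j. fst (jordan_coeffs x a t i) r $ (n t i - j)))
      else fvec t i (\<lambda>k. snd (jordan_coeffs x a t i) (r - n t i) $ (k - 1)))"

lemma gram_kron:
  assumes "generic x a" "r < 3" "r' < 3"
  shows "A x (kron_vec x a r) (kron_vec x a r') = blockA (Kron 2) r r'"
    and "A a (kron_vec x a r) (kron_vec x a r') = blockB (Kron 2) r r'"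
proof -
  have D: "x H1 * a H2 - x H2 * a H1 \<noteq> 0" using assms(1) by (simp add: generic_def)
  have "r = 0 \<or> r = 1 \<or> r = 2" "r' = 0 \<or> r' = 1 \<or> r' = 2" using assms(2,3) by auto
  then show "A x (kron_vec x a r) (kron_vec x a r') = blockA (Kron 2) r r'"
    and "A a (kron_vec x a r) (kron_vec x a r') = blockB (Kron 2) r r'"
    by (auto simp: kron_vec_def formA_unit_G_left g_pair_hsolve[OF D] skew_blk_def P_cell_def Q_cell_def
        formA_antisym[of _ _ "unit_vec G"] intro: formA_isotropic)
qed

lemma gram_kron_jordan:
  assumes "generic x a" "y = x \<or> y = a" "t \<in> {1..N}" "i \<in> {1..p t}"
  shows "A y (kron_vec x a r) (jordan_vec x a t i r') = 0"
    and "A y (jordan_vec x a t i r') (kron_vec x a r) = 0"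
proof -
  have D: "x H1 * a H2 - x H2 * a H1 \<noteq> 0" using assms(1) by (simp add: generic_def)
  show "A y (kron_vec x a r) (jordan_vec x a t i r') = 0"
    using assms(2) g_pair_kron_orth[OF D]
    by (auto simp: kron_vec_def jordan_vec_def formA_unit_G_left intro: formA_isotropic)
  then show "A y (jordan_vec x a t i r') (kron_vec x a r) = 0"
    by (subst formA_antisym) simp
qed

definition blocks :: "(nat \<times> nat) set" where
  "blocks = (SIGMA t:{1..N}. {1..p t})"

definition block_list :: "(nat \<times> nat) list" where
  "block_list = (SOME l. distinct l \<and> set l = blocks)"

lemma block_list: "distinct block_list" "set block_list = blocks"
proof -
  have "\<exists>l. distinct l \<and> set l = blocks"
    using finite_distinct_list[of blocks] by (auto simp: blocks_def)
  then have "distinct block_list \<and> set block_list = blocks"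
    unfolding block_list_def by (rule someI_ex)
  then show "distinct block_list" "set block_list = blocks" by simp_all
qed

lemma block_list_nth:
  assumes "b < length block_list"
  obtains t i where "block_list ! b = (t, i)" "t \<in> {1..N}" "i \<in> {1..p t}"
proof -
  obtain t i where ti: "block_list ! b = (t, i)" by (cases "block_list ! b")
  moreover have "(t, i) \<in> blocks" using ti nth_mem[OF assms] block_list(2) by simp
  ultimately show thesis using that by (simp add: blocks_def)
qed

definition jk_blocks :: "(gidx \<Rightarrow> complex) \<Rightarrow> (gidx \<Rightarrow> complex) \<Rightarrow> jkblock list" where
  "jk_blocks x a = Kron 2 # map (\<lambda>(t, i). Jor (Some (hval x t / hval a t)) (n t i)) block_list"

definition jk_basis :: "(gidx \<Rightarrow> complex) \<Rightarrow> (gidx \<Rightarrow> complex) \<Rightarrow> nat \<times> nat \<Rightarrow> gidx \<Rightarrow> complex" where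
  "jk_basis x a = (\<lambda>(b, r). if b = 0 then kron_vec x a r
     else (case block_list ! (b - 1) of (t, i) \<Rightarrow> jordan_vec x a t i r))"

lemma sum_list_block_dim_jk_blocks:
  "sum_list (map block_dim (jk_blocks x a)) = card (gI N p n)"
proof -
  have "sum_list (map block_dim (jk_blocks x a)) = 3 + (\<Sum>q\<leftarrow>block_list. 2 * n (fst q) (snd q))"
    by (simp add: jk_blocks_def case_prod_beta o_def)
  also have "(\<Sum>q\<leftarrow>block_list. 2 * n (fst q) (snd q)) = (\<Sum>q\<in>blocks. 2 * n (fst q) (snd q))"
    using block_list by (simp add: sum_list_distinct_conv_sum_set)
  also have "\<dots> = 2 * (\<Sum>q\<in>blocks. n (fst q) (snd q))"
    by (simp add: sum_distrib_left)
  also have "(\<Sum>q\<in>blocks. n (fst q) (snd q)) = (\<Sum>t\<in>{1..N}. \<Sum>i\<in>{1..p t}. n t i)"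
    by (simp add: blocks_def sum.Sigma case_prod_beta)
  finally show ?thesis by (simp add: card_gI)
qed

lemma mset_jk_blocks:
  "mset (jk_blocks x a) = {#Kron 2#} +
     (\<Sum>t\<in>{1..N}. image_mset (\<lambda>i. Jor (Some (hval x t / hval a t)) (n t i)) (mset_set {1..p t}))"
proof -
  let ?J = "\<lambda>(t, i). Jor (Some (hval x t / hval a t)) (n t i)"
  have "mset block_list = mset_set blocks"
    using mset_set_set[OF block_list(1)] block_list(2) by simp
  then have "mset (map ?J block_list) = image_mset ?J (mset_set blocks)"
    by simp
  also have "\<dots> = (\<Sum>t\<in>{1..N}. \<Sum>i\<in>{1..p t}. {#?J (t, i)#})"
    by (simp add: image_mset_mset_set_eq_sum blocks_def sum.Sigma case_prod_beta)
  finally show ?thesis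
    by (simp add: jk_blocks_def image_mset_mset_set_eq_sum)
qed

lemma jk_basis_in_gspace:
  assumes "b < length (jk_blocks x a)" "k \<notin> gI N p n"
  shows "jk_basis x a (b, r) k = 0"
proof (cases b)
  case 0
  then show ?thesis using assms(2) by (cases k) (auto simp: jk_basis_def kron_vec_def hsolve_def hvec_def)
next
  case (Suc b1)
  then obtain t i where "block_list ! b1 = (t, i)" "t \<in> {1..N}" "i \<in> {1..p t}"
    using assms(1) block_list_nth by (auto simp: jk_blocks_def)
  then show ?thesis
    using Suc assms(2)
    by (cases k) (auto simp: jk_basis_def jordan_vec_def kron_orth_def hsolve_def hvec_def)
qed

end

locale jordan_tuple_algebra_pos = jordan_tuple_algebra +
  assumes block_sizes_pos: "\<And>t i. t \<in> {1..N} \<Longrightarrow> i \<in> {1..p t} \<Longrightarrow> 1 \<le> n t i"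
begin

lemma gram_jordan:
  assumes "generic x a" "t \<in> {1..N}" "i \<in> {1..p t}" "t' \<in> {1..N}" "i' \<in> {1..p t'}"
    and "r < 2 * n t i" "r' < 2 * n t' i'"
  shows "A x (jordan_vec x a t i r) (jordan_vec x a t' i' r') =
           (if (t, i) = (t', i') then skew_blk (n t i) (jordan_cell (hval x t / hval a t)) r r' else 0)"
    and "A a (jordan_vec x a t i r) (jordan_vec x a t' i' r') =
           (if (t, i) = (t', i') then skew_blk (n t i) id_cell r r' else 0)"
proof -
  have iso: "A y (jordan_vec x a t1 i1 r1) (jordan_vec x a t2 i2 r2) = 0"
    if "(r1 < n t1 i1) = (r2 < n t2 i2)" for y t1 i1 r1 t2 i2 r2
    using that by (cases "r1 < n t1 i1") (auto simp: jordan_vec_def intro: formA_isotropic)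
  have pair: "A x (jordan_vec x a t1 i1 r1) (jordan_vec x a t2 i2 (n t2 i2 + s)) =
        (if (t1, i1) = (t2, i2) then jordan_cell (hval x t1 / hval a t1) r1 s else 0)
      \<and> A a (jordan_vec x a t1 i1 r1) (jordan_vec x a t2 i2 (n t2 i2 + s)) =
        (if (t1, i1) = (t2, i2) then id_cell r1 s else 0)"
    if "t1 \<in> {1..N}" "i1 \<in> {1..p t1}" "r1 < n t1 i1" "s < n t2 i2" for t1 i1 r1 t2 i2 s
    using that formA_evec_fvec[OF that(1,2) block_sizes_pos[OF that(1,2)]]
      jordan_coeffs[OF assms(1) that(1,2,3)]
    by (auto simp: jordan_vec_def)
  consider "r < n t i" "r' < n t' i'" | "r < n t i" "n t' i' \<le> r'" | "n t i \<le> r" "r' < n t' i'"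
    | "n t i \<le> r" "n t' i' \<le> r'"
    by linarith
  then have "A x (jordan_vec x a t i r) (jordan_vec x a t' i' r') =
           (if (t, i) = (t', i') then skew_blk (n t i) (jordan_cell (hval x t / hval a t)) r r' else 0)
    \<and> A a (jordan_vec x a t i r) (jordan_vec x a t' i' r') =
           (if (t, i) = (t', i') then skew_blk (n t i) id_cell r r' else 0)"
  proof cases
    case 2
    then show ?thesis
      using pair[of t i r "r' - n t' i'" t' i'] assms by (auto simp: skew_blk_def)
  next
    case 3
    then show ?thesis
      using pair[of t' i' r' "r - n t i" t i] assms
      by (subst (1 2) formA_antisym) (auto simp: skew_blk_def)
  qed (auto simp: iso skew_blk_def)
  then show "A x (jordan_vec x a t i r) (jordan_vec x a t' i' r') =
           (if (t, i) = (t', i') then skew_blk (n t i) (jordan_cell (hval x t / hval a t)) r r' else 0)"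
    and "A a (jordan_vec x a t i r) (jordan_vec x a t' i' r') =
           (if (t, i) = (t', i') then skew_blk (n t i) id_cell r r' else 0)"
    by simp_all
qed

lemma jk_basis_gram:
  assumes "generic x a"
    and b: "b < length (jk_blocks x a)" "r < block_dim (jk_blocks x a ! b)"
    and b': "b' < length (jk_blocks x a)" "r' < block_dim (jk_blocks x a ! b')"
  shows "A x (jk_basis x a (b, r)) (jk_basis x a (b', r')) =
           (if b = b' then blockA (jk_blocks x a ! b) r r' else 0) \<and>
         A a (jk_basis x a (b, r)) (jk_basis x a (b', r')) =
           (if b = b' then blockB (jk_blocks x a ! b) r r' else 0)"
proof (cases b; cases b')
  assume "b = 0" "b' = 0"
  then show ?thesis using b b' gram_kron[OF assms(1)] by (simp add: jk_blocks_def jk_basis_def)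
next
  fix b2 assume "b = 0" "b' = Suc b2"
  then obtain t i where "block_list ! b2 = (t, i)" "t \<in> {1..N}" "i \<in> {1..p t}"
    using b' block_list_nth by (auto simp: jk_blocks_def)
  then show ?thesis
    using \<open>b = 0\<close> \<open>b' = Suc b2\<close> gram_kron_jordan[OF assms(1)] by (simp add: jk_basis_def)
next
  fix b1 assume "b = Suc b1" "b' = 0"
  then obtain t i where "block_list ! b1 = (t, i)" "t \<in> {1..N}" "i \<in> {1..p t}"
    using b block_list_nth by (auto simp: jk_blocks_def)
  then show ?thesis
    using \<open>b = Suc b1\<close> \<open>b' = 0\<close> gram_kron_jordan[OF assms(1)] by (simp add: jk_basis_def)
next
  fix b1 b2 assume "b = Suc b1" "b' = Suc b2"
  moreover obtain t i where ti: "block_list ! b1 = (t, i)" "t \<in> {1..N}" "i \<in> {1..p t}"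
    using b block_list_nth \<open>b = Suc b1\<close> by (auto simp: jk_blocks_def)
  moreover obtain t' i' where ti': "block_list ! b2 = (t', i')" "t' \<in> {1..N}" "i' \<in> {1..p t'}"
    using b' block_list_nth \<open>b' = Suc b2\<close> by (auto simp: jk_blocks_def)
  moreover have "((t, i) = (t', i')) = (b1 = b2)"
    using ti(1) ti'(1) b b' \<open>b = Suc b1\<close> \<open>b' = Suc b2\<close> nth_eq_iff_index_eq[OF block_list(1), of b1 b2]
    by (auto simp: jk_blocks_def)
  ultimately show ?thesis
    using b b' gram_jordan[OF assms(1) ti(2,3) ti'(2,3)]
    by (auto simp: jk_basis_def jk_blocks_def)
qed

lemma JK_decomposition_jk_blocks:
  assumes "generic x a"
  shows "JK_decomposition (gspace N p n) (A x) (A a) (jk_blocks x a)"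
  unfolding gspace_def
proof (rule JK_decompositionI[where e="jk_basis x a"])
  show "card (gI N p n) \<le> sum_list (map block_dim (jk_blocks x a))"
    by (simp add: sum_list_block_dim_jk_blocks)
  show "block_ok b \<and> b \<noteq> Kron 1" if "b \<in> set (jk_blocks x a)" for b
    using that block_sizes_pos block_list(2) by (auto simp: jk_blocks_def blocks_def)
qed (use assms in \<open>auto simp: jk_basis_in_gspace formA_sum_left jk_basis_gram\<close>)

end

section \<open>Generic points\<close>

lemma polyfun2_fst: "(\<lambda>z. fst z k) \<in> polyfun2"
  using pf_fst[of k] by (simp add: split_def)

lemma polyfun2_snd: "(\<lambda>z. snd z k) \<in> polyfun2"
  using pf_snd[of k] by (simp add: split_def)

lemma polyfun2_diff: "f \<in> polyfun2 \<Longrightarrow> g \<in> polyfun2 \<Longrightarrow> (\<lambda>z. f z - g z) \<in> polyfun2"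
  using pf_add[OF _ pf_mult[OF pf_const[of "-1"]], of f g] by simp

lemma polyfun2_prod:
  "finite A \<Longrightarrow> (\<And>q. q \<in> A \<Longrightarrow> f q \<in> polyfun2) \<Longrightarrow> (\<lambda>z. \<Prod>q\<in>A. f q z) \<in> polyfun2"
proof (induction A rule: finite_induct)
  case empty
  then show ?case using pf_const[of 1] by simp
next
  case (insert q A)
  then show ?case using pf_mult[of "f q" "\<lambda>z. \<Prod>q\<in>A. f q z"] by simp
qed

context jordan_tuple_algebra
begin

lemma inj_on_eigenvalues:
  assumes "generic x a" and distinct: "\<forall>t\<in>{1..N}. \<forall>s\<in>{1..N}. t \<noteq> s \<longrightarrow> \<alpha> t * \<beta> s \<noteq> \<alpha> s * \<beta> t"
  shows "inj_on (\<lambda>t. Some (hval x t / hval a t)) {1..N}"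
proof (rule inj_onI, rule ccontr)
  fix t s assume ts: "t \<in> {1..N}" "s \<in> {1..N}" "Some (hval x t / hval a t) = Some (hval x s / hval a s)" "t \<noteq> s"
  then have "hval x t * hval a s - hval x s * hval a t = 0"
    using assms(1) by (auto simp: generic_def field_simps)
  moreover have "hval x t * hval a s - hval x s * hval a t = (\<alpha> t * \<beta> s - \<alpha> s * \<beta> t) * (x H1 * a H2 - x H2 * a H1)"
    by (simp add: hval_def algebra_simps)
  ultimately show False
    using assms ts by (auto simp: generic_def)
qed

definition generic_poly :: "(gidx \<Rightarrow> complex) \<times> (gidx \<Rightarrow> complex) \<Rightarrow> complex" where
  "generic_poly z = (fst z H1 * snd z H2 - fst z H2 * snd z H1) * (\<Prod>t\<in>{1..N}. hval (snd z) t)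
     * (\<Prod>t\<in>{1..N}. \<Prod>i\<in>{1..p t}. fst z (E t i 1) * hval (snd z) t - snd z (E t i 1) * hval (fst z) t)"

lemma generic_poly_polyfun2: "generic_poly \<in> polyfun2"
  unfolding generic_poly_def[abs_def] hval_def
  by (intro pf_mult polyfun2_diff pf_add polyfun2_prod finite_atLeastAtMost polyfun2_fst polyfun2_snd pf_const)

lemma generic_if_generic_poly: "generic_poly (x, a) \<noteq> 0 \<Longrightarrow> generic x a"
  by (auto simp: generic_poly_def generic_def)

end

context jordan_tuple_algebra_pos
begin

lemma generic_poly_nonvanishing:
  assumes "\<forall>t\<in>{1..N}. (\<alpha> t, \<beta> t) \<noteq> (0, 0)"
  shows "\<exists>x\<in>gspace N p n. \<exists>a\<in>gspace N p n. generic_poly (x, a) \<noteq> 0"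
proof -
  obtain c :: complex where c: "c \<notin> insert 0 ((\<lambda>t. - \<alpha> t / \<beta> t) ` {1..N})"
    using ex_new_if_finite[OF infinite_UNIV_char_0, of "insert 0 ((\<lambda>t. - \<alpha> t / \<beta> t) ` {1..N})"] by auto
  have hval_c: "\<alpha> t + \<beta> t * c \<noteq> 0" if "t \<in> {1..N}" for t
  proof
    assume "\<alpha> t + \<beta> t * c = 0"
    moreover have "\<beta> t \<noteq> 0" using calculation assms that by auto
    ultimately have "c = - \<alpha> t / \<beta> t" by (simp add: field_simps add_eq_0_iff)
    then show False using c that by auto
  qed
  define x :: "gidx \<Rightarrow> complex" where
    "x l = (case l of H1 \<Rightarrow> 1 | E t i j \<Rightarrow> if t \<in> {1..N} \<and> i \<in> {1..p t} \<and> j = 1 then 1 else 0 | _ \<Rightarrow> 0)" for l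
  define a where "a = hvec 1 c"
  have hval_a: "hval a t = \<alpha> t + \<beta> t * c" for t
    by (simp add: a_def hval_def)
  have "x \<in> gspace N p n" "a \<in> gspace N p n"
    using block_sizes_pos by (auto simp: gspace_def x_def a_def hvec_def split: gidx.split)
  moreover have "(\<Prod>t\<in>{1..N}. \<Prod>i\<in>{1..p t}. x (E t i 1) * hval a t - a (E t i 1) * hval x t)
      = (\<Prod>t\<in>{1..N}. \<Prod>i\<in>{1..p t}. hval a t)"
    by (intro prod.cong refl) (simp add: x_def a_def)
  then have "generic_poly (x, a) = c * (\<Prod>t\<in>{1..N}. hval a t) * (\<Prod>t\<in>{1..N}. \<Prod>i\<in>{1..p t}. hval a t)"
    by (simp add: generic_poly_def x_def a_def)
  moreover have "\<dots> \<noteq> 0"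
    using c hval_c by (simp add: hval_a prod_zero_iff)
  ultimately show ?thesis by metis
qed

lemma JK_invariants_at_generic:
  assumes "generic x a" and "\<forall>t\<in>{1..N}. \<forall>s\<in>{1..N}. t \<noteq> s \<longrightarrow> \<alpha> t * \<beta> s \<noteq> \<alpha> s * \<beta> t"
  shows "\<exists>lam :: nat \<Rightarrow> complex option. inj_on lam {1..N} \<and>
    (\<exists>bl. JK_decomposition (gspace N p n) (A x) (A a) bl \<and>
       mset bl = {#Kron 2#} + (\<Sum>t\<in>{1..N}. image_mset (\<lambda>i. Jor (lam t) (n t i)) (mset_set {1..p t})))"
  using inj_on_eigenvalues[OF assms] JK_decomposition_jk_blocks[OF assms(1)] mset_jk_blocks by blast

end

theorem theorem19:
  fixes N :: nat and p :: "nat \<Rightarrow> nat" and n :: "nat \<Rightarrow> nat \<Rightarrow> nat"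
    and \<alpha> \<beta> :: "nat \<Rightarrow> complex"
  assumes hp: "\<forall>t\<in>{1..N}. p t \<ge> 1"
    and hn: "\<forall>t\<in>{1..N}. \<forall>i\<in>{1..p t}. n t i \<ge> 1"
    and hmono: "\<forall>t\<in>{1..N}. \<forall>i\<in>{1..p t}. \<forall>j\<in>{1..p t}. i \<le> j \<longrightarrow> n t j \<le> n t i"
    and hnz: "\<forall>t\<in>{1..N}. (\<alpha> t, \<beta> t) \<noteq> (0, 0)"
    and hdist: "\<forall>t\<in>{1..N}. \<forall>s\<in>{1..N}. t \<noteq> s \<longrightarrow> \<alpha> t * \<beta> s \<noteq> \<alpha> s * \<beta> t"
  shows "is_lie_algebra (gspace N p n) (gbr N p n \<alpha> \<beta>) \<and>
    (\<exists>U. U \<noteq> {} \<and> zariski_open_in (gspace N p n \<times> gspace N p n) U \<and>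
      (\<forall>(x, a)\<in>U. \<exists>lam :: nat \<Rightarrow> complex option. inj_on lam {1..N} \<and>
         (\<exists>bl. JK_decomposition (gspace N p n) (formA N p n \<alpha> \<beta> x) (formA N p n \<alpha> \<beta> a) bl \<and>
               mset bl = {#Kron 2#} +
                 (\<Sum>t\<in>{1..N}. image_mset (\<lambda>i. Jor (lam t) (n t i)) (mset_set {1..p t})))))"
proof -
  \<comment> \<open>\<open>hp\<close> and \<open>hmono\<close> are not needed: an index t with no blocks contributes nothing, and
    the multiset of blocks ignores the order of the sizes.\<close>
  interpret jordan_tuple_algebra_pos N p n \<alpha> \<beta>
    using hn by unfold_locales auto
  define U where "U = {z \<in> gspace N p n \<times> gspace N p n. \<exists>f\<in>{generic_poly}. f z \<noteq> 0}"
  have U_nonempty: "U \<noteq> {}"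
    using generic_poly_nonvanishing[OF hnz] by (auto simp: U_def)
  have U_open: "zariski_open_in (gspace N p n \<times> gspace N p n) U"
    unfolding zariski_open_in_def U_def using generic_poly_polyfun2 by blast
  have U_generic: "generic x a" if "(x, a) \<in> U" for x a
    using that generic_if_generic_poly by (auto simp: U_def)
  show ?thesis
    by (intro conjI exI[of _ U] ballI case_prodI2 is_lie_algebra_gspace U_nonempty U_open
        JK_invariants_at_generic[OF _ hdist]) (auto intro: U_generic)
qed

end
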